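(* Let $d,a,b,p,p'\ge 0$ be integers and \[F=\sum_{\mu\vdash d}\{s_\mu h_a\}_{\lambda_1=p}\otimes\{s_\mu h_b\}_{\lambda_1=p'} .\] Let $\lambda^{(1)}\vdash a+d$ and $\lambda^{(2)}\vdash b+d$. If $\lambda^{(1)}_1=p$, $\lambda^{(2)}_1=p'$, and $\min\{\lambda^{(1)}_i,\lambda^{(2)}_i\}\ge\max\{\lambda^{(1)}_{i+1},\lambda^{(2)}_{i+1}\}$ for all $i\ge1$, then the coefficient of $s_{\lambda^{(1)}}\otimes s_{\lambda^{(2)}}$ in the Schur expansion of $F$ equals the coefficient of $t^{\,d-\sum_{i\ge1}\max\{\lambda^{(1)}_{i+1},\lambda^{(2)}_{i+1}\}}$ in the polynomial \[\prod_{i\ge1}\Bigl(\sum_{j=0}^{\min\{\lambda^{(1)}_i,\lambda^{(2)}_i\}-\max\{\lambda^{(1)}_{i+1},\lambda^{(2)}_{i+1}\}}t^j\Bigr).\] Otherwise this coefficient is $0$.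
   Context: $\Lambda$ is the ring of symmetric functions, $s_\lambda$ the Schur functions, $h_k$ the complete homogeneous symmetric functions ($h_k=0$ for $k<0$). For $G=\sum_\lambda c_\lambda s_\lambda\in\Lambda$ and an integer $p$, the truncation $\{G\}_{\lambda_1=p}:=\sum_{\lambda:\lambda_1=p}c_\lambda s_\lambda$. Partitions are padded with zeros, so $\lambda_i=0$ for $i$ larger than the length; $t$ is a formal variable (the product is finite since almost all factors equal $1$). *)

theory Defs
  imports Main "HOL-Computational_Algebra.Polynomial"
begin

text \<open>A partition is a weakly decreasing list of positive naturals.
  Parts are 1-indexed and padded with zeros.\<close>

definition is_partition :: "nat list \<Rightarrow> bool" where
  "is_partition lam \<longleftrightarrow> sorted_wrt (\<ge>) lam \<and> 0 \<notin> set lam"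

definition partitions_of :: "nat \<Rightarrow> nat list set" where
  "partitions_of n = {lam. is_partition lam \<and> sum_list lam = n}"

definition part :: "nat list \<Rightarrow> nat \<Rightarrow> nat" where
  "part lam i = (if 1 \<le> i \<and> i \<le> length lam then lam ! (i - 1) else 0)"

text \<open>An element of Lambda is represented by its coefficient function on monomials
  (exponent vectors nat => nat); an element of Lambda (x) Lambda by its coefficient
  function on pairs of monomials.\<close>

type_synonym monomial = "nat \<Rightarrow> nat"
type_synonym symfun = "monomial \<Rightarrow> int"
type_synonym symfun2 = "monomial \<Rightarrow> monomial \<Rightarrow> int"

definition sf_mult :: "symfun \<Rightarrow> symfun \<Rightarrow> symfun" where
  "sf_mult f g = (\<lambda>\<alpha>. \<Sum>\<beta>\<in>{\<beta>. \<forall>i. \<beta> i \<le> \<alpha> i}. f \<beta> * g (\<lambda>i. \<alpha> i - \<beta> i))"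

definition complete_h :: "nat \<Rightarrow> symfun" where
  "complete_h k = (\<lambda>\<alpha>. if finite {i. \<alpha> i \<noteq> 0} \<and> (\<Sum>i\<in>{i. \<alpha> i \<noteq> 0}. \<alpha> i) = k
                        then 1 else 0)"

text \<open>Cells of the Young diagram (0-indexed rows/columns) and semistandard tableaux.\<close>

definition cells :: "nat list \<Rightarrow> (nat \<times> nat) set" where
  "cells lam = {(i, j). i < length lam \<and> j < lam ! i}"

definition ssyt :: "nat list \<Rightarrow> (nat \<times> nat \<Rightarrow> nat) \<Rightarrow> bool" where
  "ssyt lam T \<longleftrightarrow>
     (\<forall>c. c \<notin> cells lam \<longrightarrow> T c = 0) \<and>
     (\<forall>i j. (i, j + 1) \<in> cells lam \<longrightarrow> T (i, j) \<le> T (i, j + 1)) \<and>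
     (\<forall>i j. (i + 1, j) \<in> cells lam \<longrightarrow> T (i, j) < T (i + 1, j))"

definition content :: "nat list \<Rightarrow> (nat \<times> nat \<Rightarrow> nat) \<Rightarrow> monomial" where
  "content lam T = (\<lambda>k. card {c \<in> cells lam. T c = k})"

definition schur :: "nat list \<Rightarrow> symfun" where
  "schur lam = (\<lambda>\<alpha>. int (card {T. ssyt lam T \<and> content lam T = \<alpha>}))"

definition schur_coeff :: "symfun \<Rightarrow> nat list \<Rightarrow> int" where
  "schur_coeff G = (THE c. finite {\<mu>. c \<mu> \<noteq> 0} \<and> (\<forall>\<mu>. c \<mu> \<noteq> 0 \<longrightarrow> is_partition \<mu>) \<and>
       G = (\<lambda>\<alpha>. \<Sum>\<mu>\<in>{\<mu>. c \<mu> \<noteq> 0}. c \<mu> * schur \<mu> \<alpha>))"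

definition truncate_first :: "nat \<Rightarrow> symfun \<Rightarrow> symfun" where
  "truncate_first p G = (\<lambda>\<alpha>. \<Sum>\<mu>\<in>{\<mu>. schur_coeff G \<mu> \<noteq> 0 \<and> part \<mu> 1 = p}.
                            schur_coeff G \<mu> * schur \<mu> \<alpha>)"

definition schur_coeff2 :: "symfun2 \<Rightarrow> nat list \<times> nat list \<Rightarrow> int" where
  "schur_coeff2 F = (THE c. finite {m. c m \<noteq> 0} \<and>
       (\<forall>\<mu> \<nu>. c (\<mu>, \<nu>) \<noteq> 0 \<longrightarrow> is_partition \<mu> \<and> is_partition \<nu>) \<and>
       F = (\<lambda>\<alpha> \<beta>. \<Sum>(\<mu>, \<nu>)\<in>{m. c m \<noteq> 0}. c (\<mu>, \<nu>) * (schur \<mu> \<alpha> * schur \<nu> \<beta>)))"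

definition F_sum :: "nat \<Rightarrow> nat \<Rightarrow> nat \<Rightarrow> nat \<Rightarrow> nat \<Rightarrow> symfun2" where
  "F_sum d a b p p' = (\<lambda>\<alpha> \<beta>. \<Sum>\<mu>\<in>partitions_of d.
      truncate_first p (sf_mult (schur \<mu>) (complete_h a)) \<alpha> *
      truncate_first p' (sf_mult (schur \<mu>) (complete_h b)) \<beta>)"

end

theory Submission
  imports Defs "HOL-Library.FuncSet"
begin

(* By Pieri's rule, s_mu h_a is the sum of the s_lam over all lam such that lam/mu is a
   horizontal strip of size a, so F is the sum of s_lam1 (x) s_lam2 over all mu |- d for which
   lam1/mu and lam2/mu are horizontal strips and lam1_1 = p, lam2_1 = p'. The products
   s_lam1 (x) s_lam2 are linearly independent, since the coefficient of x^nu in s_lam vanishes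
   unless nu is dominated by lam. Hence the coefficient in question counts the mu |- d with
   max(lam1_(i+1), lam2_(i+1)) <= mu_i <= min(lam1_i, lam2_i) for all i. Any such sequence is
   automatically a partition, and subtracting the lower bounds turns these mu into sequences
   0 <= j_i <= min(lam1_i, lam2_i) - max(lam1_(i+1), lam2_(i+1)) summing to
   d - sum_i max(lam1_(i+1), lam2_(i+1)), which the product of geometric sums counts.

   Pieri's rule is derived from the tableau definition of Schur functions by induction on the
   number of variables: the entries equal to the largest variable index form a horizontal strip
   (branching rule), and a reflection of parts exchanges adding and removing horizontal
   strips. *)

section \<open>Shapes, tableaux and horizontal strips\<close>

definition shape :: "nat list \<Rightarrow> nat \<Rightarrow> nat" where
  "shape lam i = (if i < length lam then lam ! i else 0)"

definition diagram :: "(nat \<Rightarrow> nat) \<Rightarrow> (nat \<times> nat) set" where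
  "diagram f = {(i, j). j < f i}"

definition is_ssyt :: "(nat \<Rightarrow> nat) \<Rightarrow> (nat \<times> nat \<Rightarrow> nat) \<Rightarrow> bool" where
  "is_ssyt f T \<longleftrightarrow>
     (\<forall>c. c \<notin> diagram f \<longrightarrow> T c = 0) \<and>
     (\<forall>i j. (i, j + 1) \<in> diagram f \<longrightarrow> T (i, j) \<le> T (i, j + 1)) \<and>
     (\<forall>i j. (i + 1, j) \<in> diagram f \<longrightarrow> T (i, j) < T (i + 1, j))"

definition weight :: "(nat \<Rightarrow> nat) \<Rightarrow> (nat \<times> nat \<Rightarrow> nat) \<Rightarrow> monomial" where
  "weight f T = (\<lambda>k. card {c \<in> diagram f. T c = k})"

definition tableaux :: "(nat \<Rightarrow> nat) \<Rightarrow> monomial \<Rightarrow> (nat \<times> nat \<Rightarrow> nat) set" where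
  "tableaux f \<alpha> = {T. is_ssyt f T \<and> weight f T = \<alpha>}"

definition schur_fun :: "(nat \<Rightarrow> nat) \<Rightarrow> symfun" where
  "schur_fun f \<alpha> = int (card (tableaux f \<alpha>))"

definition shape_size :: "(nat \<Rightarrow> nat) \<Rightarrow> nat" where
  "shape_size f = sum f {i. f i \<noteq> 0}"

text \<open>\<open>horizontal_strip g f\<close> says that \<open>f / g\<close> is a horizontal strip; this forces both \<open>f\<close>
  and \<open>g\<close> to be weakly decreasing.\<close>

definition horizontal_strip :: "(nat \<Rightarrow> nat) \<Rightarrow> (nat \<Rightarrow> nat) \<Rightarrow> bool" where
  "horizontal_strip g f \<longleftrightarrow> (\<forall>i. f (Suc i) \<le> g i \<and> g i \<le> f i)"

definition inner_strips :: "(nat \<Rightarrow> nat) \<Rightarrow> nat \<Rightarrow> (nat \<Rightarrow> nat) set" where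
  "inner_strips f k = {g. horizontal_strip g f \<and> shape_size g + k = shape_size f}"

definition outer_strips :: "(nat \<Rightarrow> nat) \<Rightarrow> nat \<Rightarrow> (nat \<Rightarrow> nat) set" where
  "outer_strips g k = {f. horizontal_strip g f \<and> shape_size f = shape_size g + k}"

lemma part_Suc_eq_shape: "part lam (Suc i) = shape lam i"
  by (simp add: part_def shape_def)

lemma shape_eq_0: "length lam \<le> i \<Longrightarrow> shape lam i = 0"
  by (simp add: shape_def)

lemma shape_decreasing: "is_partition lam \<Longrightarrow> shape lam (Suc i) \<le> shape lam i"
  unfolding is_partition_def shape_def sorted_wrt_iff_nth_less by auto

lemma cells_eq_diagram: "cells lam = diagram (shape lam)"
  by (auto simp: cells_def diagram_def shape_def split: if_splits)

lemma schur_eq_schur_fun: "schur lam = schur_fun (shape lam)"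
  unfolding schur_def schur_fun_def tableaux_def ssyt_def is_ssyt_def content_def weight_def
    cells_eq_diagram ..

lemma shape_size_eq_sum:
  assumes "\<forall>i\<ge>K. f i = 0"
  shows "shape_size f = (\<Sum>i<K. f i)"
  unfolding shape_size_def
proof (rule sum.mono_neutral_left)
  show "{i. f i \<noteq> 0} \<subseteq> {..<K}" using assms by (auto intro: ccontr simp: not_less)
qed auto

lemma shape_size_shape: "shape_size (shape lam) = sum_list lam"
proof -
  have "shape_size (shape lam) = (\<Sum>i<length lam. shape lam i)"
    using shape_size_eq_sum[of "length lam"] by (simp add: shape_eq_0)
  also have "\<dots> = (\<Sum>i<length lam. lam ! i)" by (rule sum.cong) (auto simp: shape_def)
  finally show ?thesis by (simp add: sum_list_sum_nth atLeast0LessThan)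
qed

lemma shape_size_mono:
  assumes "\<forall>i. f i \<le> g i" "\<forall>i\<ge>K. g i = 0"
  shows "shape_size f \<le> shape_size g"
proof -
  have "\<forall>i\<ge>K. f i = 0" using assms by (metis le_zero_eq)
  then have "shape_size f = (\<Sum>i<K. f i)" by (rule shape_size_eq_sum)
  then show ?thesis unfolding shape_size_eq_sum[OF assms(2)] by (simp add: assms(1) sum_mono)
qed

lemma diagram_eq_Sigma:
  assumes "\<forall>i\<ge>K. f i = 0"
  shows "diagram f = Sigma {..<K} (\<lambda>i. {..<f i})"
  using assms by (auto intro: ccontr simp: diagram_def not_less)

lemma finite_diagram: "\<forall>i\<ge>K. f i = 0 \<Longrightarrow> finite (diagram f)"
  using diagram_eq_Sigma by simp

lemma card_diagram: "\<forall>i\<ge>K. f i = 0 \<Longrightarrow> card (diagram f) = shape_size f"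
  using diagram_eq_Sigma shape_size_eq_sum by simp

lemma diagram_inject:
  assumes "diagram g = diagram f"
  shows "g = f"
proof
  fix i
  have "j < g i \<longleftrightarrow> j < f i" for j using assms by (auto simp: diagram_def set_eq_iff)
  then show "g i = f i" by (metis linorder_neqE_nat less_irrefl)
qed

lemma horizontal_strip_decreasing:
  assumes "horizontal_strip g f"
  shows "g (Suc i) \<le> g i" "f (Suc i) \<le> f i"
  using assms unfolding horizontal_strip_def by (metis le_trans)+

lemma horizontal_strip_diagram: "horizontal_strip g f \<Longrightarrow> diagram g \<subseteq> diagram f"
  unfolding horizontal_strip_def diagram_def by (auto intro: less_le_trans)

lemma horizontal_strip_inner_vanishes:
  "horizontal_strip g f \<Longrightarrow> \<forall>i\<ge>K. f i = 0 \<Longrightarrow> \<forall>i\<ge>K. g i = 0"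
  unfolding horizontal_strip_def by (metis le_zero_eq)

lemma horizontal_strip_outer_vanishes:
  assumes "horizontal_strip g f" "\<forall>i\<ge>K. g i = 0"
  shows "\<forall>i\<ge>Suc K. f i = 0"
proof (intro allI impI)
  fix i assume "Suc K \<le> i"
  then obtain j where "i = Suc j" "K \<le> j" by (metis Suc_le_D Suc_le_mono)
  then show "f i = 0" using assms unfolding horizontal_strip_def by (metis le_zero_eq)
qed

lemma finite_bounded_funs:
  assumes "finite C"
  shows "finite {h :: 'a \<Rightarrow> nat. (\<forall>x. x \<notin> C \<longrightarrow> h x = 0) \<and> (\<forall>x. h x \<le> N)}" (is "finite ?S")
proof -
  have "inj_on (\<lambda>h. restrict h C) ?S"
  proof (rule inj_onI)
    fix h1 h2 assume h: "h1 \<in> ?S" "h2 \<in> ?S" "restrict h1 C = restrict h2 C"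
    show "h1 = h2"
    proof
      fix x show "h1 x = h2 x"
      proof (cases "x \<in> C")
        case True then show ?thesis using fun_cong[OF h(3), of x] by simp
      next
        case False then show ?thesis using h(1,2) by simp
      qed
    qed
  qed
  moreover have "(\<lambda>h. restrict h C) ` ?S \<subseteq> PiE C (\<lambda>_. {..N})" by auto
  moreover have "finite (PiE C (\<lambda>_. {..N}))" using assms by (simp add: finite_PiE)
  ultimately show ?thesis by (meson finite_imageD finite_subset)
qed

lemma finite_inner_strips:
  assumes "\<forall>i\<ge>K. f i = 0"
  shows "finite (inner_strips f k)"
proof -
  have "inner_strips f k
      \<subseteq> {h. (\<forall>x. x \<notin> {..<K} \<longrightarrow> h x = 0) \<and> (\<forall>x. h x \<le> f 0)}"
  proof (intro subsetI CollectI conjI allI impI)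
    fix g x assume "g \<in> inner_strips f k"
    then have g: "horizontal_strip g f" by (simp add: inner_strips_def)
    show "x \<notin> {..<K} \<Longrightarrow> g x = 0" using horizontal_strip_inner_vanishes[OF g assms] by simp
    have "g x \<le> f x" using g by (simp add: horizontal_strip_def)
    also have "f x \<le> f 0" using lift_Suc_antimono_le horizontal_strip_decreasing(2)[OF g] by blast
    finally show "g x \<le> f 0" .
  qed
  then show ?thesis using finite_bounded_funs[of "{..<K}" "f 0"] finite_subset by blast
qed

lemma finite_outer_strips:
  assumes "\<forall>i\<ge>K. g i = 0"
  shows "finite (outer_strips g k)"
proof -
  let ?N = "shape_size g + k"
  have "outer_strips g k
      \<subseteq> {h. (\<forall>x. x \<notin> {..<Suc K} \<longrightarrow> h x = 0) \<and> (\<forall>x. h x \<le> ?N)}"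
  proof (intro subsetI CollectI conjI allI impI)
    fix f x assume "f \<in> outer_strips g k"
    then have f: "horizontal_strip g f" and size: "shape_size f = ?N" by (auto simp: outer_strips_def)
    have vanish: "\<forall>i\<ge>Suc K. f i = 0" using horizontal_strip_outer_vanishes[OF f assms] .
    then show "x \<notin> {..<Suc K} \<Longrightarrow> f x = 0" by simp
    have "f x \<le> f 0" using lift_Suc_antimono_le horizontal_strip_decreasing(2)[OF f] by blast
    also have "f 0 \<le> (\<Sum>i<Suc K. f i)" by (rule member_le_sum) auto
    finally show "f x \<le> ?N" using shape_size_eq_sum[OF vanish] size by simp
  qed
  then show ?thesis using finite_bounded_funs[of "{..<Suc K}" ?N] finite_subset by blast
qed

lemma tableau_entry_weight:
  assumes "T \<in> tableaux f \<alpha>" "c \<in> diagram f" "finite (diagram f)"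
  shows "\<alpha> (T c) \<noteq> 0"
proof -
  have "{c' \<in> diagram f. T c' = T c} \<noteq> {}" using assms(2) by blast
  then have "card {c' \<in> diagram f. T c' = T c} \<noteq> 0" using assms(3) by simp
  then show ?thesis using assms(1) unfolding tableaux_def weight_def by auto
qed

lemma finite_tableaux:
  assumes "\<forall>i\<ge>K. f i = 0" "\<forall>t\<ge>N. \<alpha> t = 0"
  shows "finite (tableaux f \<alpha>)"
proof -
  have "tableaux f \<alpha> \<subseteq> {h. (\<forall>x. x \<notin> diagram f \<longrightarrow> h x = 0) \<and> (\<forall>x. h x \<le> N)}"
  proof (intro subsetI CollectI conjI allI impI)
    fix T x assume T: "T \<in> tableaux f \<alpha>"
    then show outside: "x \<notin> diagram f \<Longrightarrow> T x = 0" unfolding tableaux_def is_ssyt_def by blast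
    show "T x \<le> N"
    proof (cases "x \<in> diagram f")
      case True
      then have "\<alpha> (T x) \<noteq> 0" using tableau_entry_weight[OF T _ finite_diagram[OF assms(1)]] by blast
      then show ?thesis using assms(2) by (meson nat_le_linear)
    qed (use outside in simp)
  qed
  then show ?thesis using finite_bounded_funs[OF finite_diagram[OF assms(1)]] finite_subset by blast
qed

lemma ssyt_row_mono:
  assumes "is_ssyt f T" "j < f i" "j' \<le> j"
  shows "T (i, j') \<le> T (i, j)"
  using assms(3,2)
proof (induction j rule: dec_induct)
  case (step m)
  then have "(i, m + 1) \<in> diagram f" by (simp add: diagram_def)
  then show ?case using step assms(1) unfolding is_ssyt_def by (metis Suc_eq_plus1 le_trans Suc_lessD)
qed simp

lemma ssyt_column_ge:
  assumes "is_ssyt f T" "\<forall>i. f (Suc i) \<le> f i" "(i, j) \<in> diagram f"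
  shows "i \<le> T (i, j)"
  using assms(3)
proof (induction i)
  case (Suc i)
  have "(i, j) \<in> diagram f" using Suc.prems assms(2) by (auto simp: diagram_def intro: less_le_trans)
  moreover have "T (i, j) < T (Suc i, j)" using assms(1) Suc.prems unfolding is_ssyt_def by simp
  ultimately show ?case using Suc.IH by simp
qed simp

lemma down_closed_eq_lessThan:
  fixes S :: "nat set"
  assumes "finite S" "\<And>j j'. j \<in> S \<Longrightarrow> j' < j \<Longrightarrow> j' \<in> S"
  shows "S = {..<card S}"
proof -
  define m where "m = (LEAST x. x \<notin> S)"
  have "\<exists>k. k \<notin> S" using assms(1) ex_new_if_finite infinite_UNIV_nat by blast
  then have "m \<notin> S" unfolding m_def by (metis LeastI)
  moreover have "x < m \<Longrightarrow> x \<in> S" for x unfolding m_def using not_less_Least by blast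
  ultimately have "S = {..<m}" using assms(2) by (metis lessThan_iff linorder_neqE_nat subsetI subset_antisym)
  then show ?thesis by simp
qed

lemma shape_vanishes: "\<forall>i\<ge>length lam. shape lam i = 0"
  by (simp add: shape_def)

lemma set_shape_nonzero:
  assumes "is_partition lam"
  shows "{i. shape lam i \<noteq> 0} = {..<length lam}"
proof -
  have "lam ! i \<noteq> 0" if "i < length lam" for i
    using nth_mem[OF that] assms unfolding is_partition_def by metis
  then show ?thesis by (auto simp: shape_def)
qed

lemma shape_inject:
  assumes "is_partition l1" "is_partition l2" "shape l1 = shape l2"
  shows "l1 = l2"
proof -
  have "{..<length l1} = {..<length l2}"
    using set_shape_nonzero[OF assms(1)] set_shape_nonzero[OF assms(2)] assms(3) by simp
  then have "length l1 = length l2" by (metis card_lessThan)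
  moreover have "l1 ! i = l2 ! i" if "i < length l1" for i
    using fun_cong[OF assms(3), of i] that calculation by (simp add: shape_def)
  ultimately show ?thesis by (simp add: nth_equalityI)
qed

definition partition_of_shape :: "(nat \<Rightarrow> nat) \<Rightarrow> nat list" where
  "partition_of_shape f = map f [0..<card {i. f i \<noteq> 0}]"

lemma partition_of_shape:
  assumes dec: "\<forall>i. f (Suc i) \<le> f i" and vanish: "\<forall>i\<ge>K. f i = 0"
  shows "shape (partition_of_shape f) = f" "is_partition (partition_of_shape f)"
proof -
  define L where "L = card {i. f i \<noteq> 0}"
  have anti: "f j \<le> f i" if "i \<le> j" for i j using lift_Suc_antimono_le[of f i j] dec that by blast
  have "{i. f i \<noteq> 0} \<subseteq> {..<K}" using vanish not_less by auto
  then have "finite {i. f i \<noteq> 0}" using finite_subset by blast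
  then have "{i. f i \<noteq> 0} = {..<L}" unfolding L_def
  proof (rule down_closed_eq_lessThan)
    fix j j' assume "j \<in> {i. f i \<noteq> 0}" "j' < j"
    then show "j' \<in> {i. f i \<noteq> 0}" using anti[of j' j] by simp
  qed
  then have nonzero: "f i \<noteq> 0 \<longleftrightarrow> i < L" for i by blast
  have len: "length (partition_of_shape f) = L" and nth: "i < L \<Longrightarrow> partition_of_shape f ! i = f i" for i
    by (simp_all add: partition_of_shape_def L_def)
  show "shape (partition_of_shape f) = f"
  proof
    fix i show "shape (partition_of_shape f) i = f i"
      using nonzero[of i] len nth[of i] by (auto simp: shape_def)
  qed
  have "sorted_wrt (\<ge>) (partition_of_shape f)"
    unfolding sorted_wrt_iff_nth_less using anti len nth by simp
  moreover have "0 \<notin> set (partition_of_shape f)"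
    using nonzero len nth by (auto simp: in_set_conv_nth)
  ultimately show "is_partition (partition_of_shape f)" by (simp add: is_partition_def)
qed

lemma partition_of_shape_shape: "is_partition mu \<Longrightarrow> partition_of_shape (shape mu) = mu"
  using partition_of_shape[OF _ shape_vanishes] shape_decreasing shape_inject by blast

lemma finite_partitions: "finite (partitions_of n)"
proof -
  have "length xs \<le> sum_list xs" if "0 \<notin> set xs" for xs :: "nat list"
    using that by (induction xs) auto
  then have "partitions_of n \<subseteq> {xs. set xs \<subseteq> {..n} \<and> length xs \<le> n}"
    using member_le_sum_list by (fastforce simp: partitions_of_def is_partition_def)
  then show ?thesis using finite_lists_length_le[of "{..n}" n] finite_subset by blast
qed

section \<open>The branching rule\<close>

definition fill_strip ::
  "(nat \<Rightarrow> nat) \<Rightarrow> (nat \<Rightarrow> nat) \<Rightarrow> nat \<Rightarrow> (nat \<times> nat \<Rightarrow> nat) \<Rightarrow> nat \<times> nat \<Rightarrow> nat" where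
  "fill_strip f g n T = (\<lambda>c. if c \<in> diagram g then T c else if c \<in> diagram f then n else 0)"

lemma tableau_entry_less:
  assumes "T \<in> tableaux g \<beta>" "c \<in> diagram g" "finite (diagram g)" "\<forall>j\<ge>n. \<beta> j = 0"
  shows "T c < n"
  using tableau_entry_weight[OF assms(1-3)] assms(4) by (meson not_le)

lemma fill_strip_in_tableaux:
  assumes strip: "horizontal_strip g f" and size: "shape_size g + k = shape_size f"
    and f: "\<forall>i\<ge>K. f i = 0" and \<beta>: "\<forall>j\<ge>n. \<beta> j = 0" and T: "T \<in> tableaux g \<beta>"
  shows "fill_strip f g n T \<in> tableaux f (\<beta>(n := k))"
proof -
  let ?T = "fill_strip f g n T"
  have g: "\<forall>i\<ge>K. g i = 0" using horizontal_strip_inner_vanishes[OF strip f] .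
  have less: "c \<in> diagram g \<Longrightarrow> T c < n" for c
    using tableau_entry_less[OF T _ finite_diagram[OF g] \<beta>] .
  have sub: "diagram g \<subseteq> diagram f" using horizontal_strip_diagram[OF strip] .
  have ssyt: "is_ssyt g T" and weight: "weight g T = \<beta>" using T by (auto simp: tableaux_def)
  have rows: "?T (i, j) \<le> ?T (i, j + 1)" if "(i, j + 1) \<in> diagram f" for i j
  proof (cases "(i, j + 1) \<in> diagram g")
    case True
    then have "(i, j) \<in> diagram g" by (simp add: diagram_def)
    then show ?thesis using True ssyt by (simp add: fill_strip_def is_ssyt_def)
  next
    case False
    have "(i, j) \<in> diagram f" using that by (simp add: diagram_def)
    then show ?thesis using False less[of "(i, j)"] that by (auto simp: fill_strip_def)
  qed
  have columns: "?T (i, j) < ?T (i + 1, j)" if "(i + 1, j) \<in> diagram f" for i j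
  proof -
    have "(i, j) \<in> diagram g" using that strip unfolding horizontal_strip_def diagram_def
      by (auto intro: less_le_trans)
    moreover have "(i + 1, j) \<in> diagram g \<Longrightarrow> T (i, j) < T (i + 1, j)"
      using ssyt by (simp add: is_ssyt_def)
    ultimately show ?thesis using less[of "(i, j)"] that by (auto simp: fill_strip_def)
  qed
  have "is_ssyt f ?T" unfolding is_ssyt_def using sub rows columns by (auto simp: fill_strip_def)
  moreover have "weight f ?T m = (\<beta>(n := k)) m" for m
  proof (cases "m = n")
    case True
    then have "{c \<in> diagram f. ?T c = m} = diagram f - diagram g" using less by (auto simp: fill_strip_def)
    then have "weight f ?T m = card (diagram f) - card (diagram g)"
      using sub finite_diagram[OF g] by (simp add: weight_def card_Diff_subset)
    then show ?thesis using True card_diagram[OF f] card_diagram[OF g] size by simp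
  next
    case False
    then have "{c \<in> diagram f. ?T c = m} = {c \<in> diagram g. T c = m}"
      using sub by (auto simp: fill_strip_def)
    then show ?thesis using False fun_cong[OF weight, of m] by (simp add: weight_def)
  qed
  ultimately show ?thesis by (auto simp: tableaux_def)
qed

lemma fill_strip_inject:
  assumes "T1 \<in> tableaux g \<beta>" "T2 \<in> tableaux g \<beta>" "fill_strip f g n T1 = fill_strip f g n T2"
  shows "T1 = T2"
proof
  fix c
  show "T1 c = T2 c"
  proof (cases "c \<in> diagram g")
    case True then show ?thesis using fun_cong[OF assms(3), of c] by (simp add: fill_strip_def)
  next
    case False
    then have "T1 c = 0" "T2 c = 0" using assms(1,2) unfolding tableaux_def is_ssyt_def by blast+
    then show ?thesis by simp
  qed
qed

lemma fill_strip_less: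
  assumes "horizontal_strip g f" "\<forall>i\<ge>K. f i = 0" "\<forall>j\<ge>n. \<beta> j = 0" "T \<in> tableaux g \<beta>"
  shows "{c \<in> diagram f. fill_strip f g n T c < n} = diagram g"
proof -
  have "finite (diagram g)" using finite_diagram horizontal_strip_inner_vanishes assms(1,2) by blast
  then have "c \<in> diagram g \<Longrightarrow> T c < n" for c using tableau_entry_less assms(3,4) by blast
  then show ?thesis using horizontal_strip_diagram[OF assms(1)] by (auto simp: fill_strip_def)
qed

definition shape_below :: "(nat \<Rightarrow> nat) \<Rightarrow> (nat \<times> nat \<Rightarrow> nat) \<Rightarrow> nat \<Rightarrow> nat \<Rightarrow> nat" where
  "shape_below f T n i = card {j. j < f i \<and> T (i, j) < n}"

lemma diagram_shape_below:
  assumes "is_ssyt f T"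
  shows "diagram (shape_below f T n) = {c \<in> diagram f. T c < n}"
proof -
  have "{j. j < f i \<and> T (i, j) < n} = {..<shape_below f T n i}" for i
    unfolding shape_below_def
  proof (rule down_closed_eq_lessThan)
    fix j j' assume "j \<in> {j. j < f i \<and> T (i, j) < n}" "j' < j"
    then show "j' \<in> {j. j < f i \<and> T (i, j) < n}" using ssyt_row_mono[OF assms, of j i j'] by auto
  qed simp
  then show ?thesis by (auto simp: diagram_def set_eq_iff)
qed

text \<open>The cells holding the largest entry form a horizontal strip because columns increase
  strictly.\<close>

lemma horizontal_strip_shape_below:
  assumes ssyt: "is_ssyt f T" and dec: "\<forall>i. f (Suc i) \<le> f i"
    and le: "\<And>c. c \<in> diagram f \<Longrightarrow> T c \<le> n"
  shows "horizontal_strip (shape_below f T n) f"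
  unfolding horizontal_strip_def
proof
  fix i
  have lower: "{..<f (Suc i)} \<subseteq> {j. j < f i \<and> T (i, j) < n}"
  proof (intro subsetI CollectI conjI)
    fix j assume "j \<in> {..<f (Suc i)}"
    then have j: "(Suc i, j) \<in> diagram f" by (simp add: diagram_def)
    then show "j < f i" using dec[rule_format, of i] by (simp add: diagram_def)
    have "T (i, j) < T (Suc i, j)" using ssyt j by (simp add: is_ssyt_def)
    then show "T (i, j) < n" using le[OF j] by simp
  qed
  have upper: "{j. j < f i \<and> T (i, j) < n} \<subseteq> {..<f i}" by auto
  have "card {..<f (Suc i)} \<le> shape_below f T n i" "shape_below f T n i \<le> card {..<f i}"
    unfolding shape_below_def using card_mono[OF _ lower] card_mono[OF _ upper] by simp_all
  then show "f (Suc i) \<le> shape_below f T n i \<and> shape_below f T n i \<le> f i" by simp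
qed

lemma is_ssyt_restrict:
  assumes ssyt: "is_ssyt f T" and sub: "diagram g \<subseteq> diagram f" and dec: "\<forall>i. g (Suc i) \<le> g i"
  shows "is_ssyt g (\<lambda>c. if c \<in> diagram g then T c else 0)"
  unfolding is_ssyt_def
proof (intro conjI allI impI)
  fix i j
  assume c: "(i, j + 1) \<in> diagram g"
  then have "(i, j) \<in> diagram g" by (simp add: diagram_def)
  moreover have "T (i, j) \<le> T (i, j + 1)" using c sub ssyt by (auto simp: is_ssyt_def)
  ultimately show "(if (i, j) \<in> diagram g then T (i, j) else 0) \<le>
      (if (i, j + 1) \<in> diagram g then T (i, j + 1) else 0)" using c by simp
next
  fix i j
  assume c: "(i + 1, j) \<in> diagram g"
  then have "(i, j) \<in> diagram g" using dec[rule_format, of i] by (simp add: diagram_def)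
  moreover have "T (i, j) < T (i + 1, j)" using c sub ssyt by (auto simp: is_ssyt_def)
  ultimately show "(if (i, j) \<in> diagram g then T (i, j) else 0) <
      (if (i + 1, j) \<in> diagram g then T (i + 1, j) else 0)" using c by simp
qed simp

lemma tableau_eq_fill_strip:
  assumes dec: "\<forall>i. f (Suc i) \<le> f i" and f: "\<forall>i\<ge>K. f i = 0" and \<beta>: "\<forall>j\<ge>n. \<beta> j = 0"
    and T: "T \<in> tableaux f (\<beta>(n := k))"
  obtains g T' where "horizontal_strip g f" "shape_size g + k = shape_size f"
    "T' \<in> tableaux g \<beta>" "T = fill_strip f g n T'"
proof -
  have ssyt: "is_ssyt f T" and weight: "weight f T = \<beta>(n := k)" using T by (auto simp: tableaux_def)
  have card_entry: "card {c \<in> diagram f. T c = m} = (\<beta>(n := k)) m" for m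
    using fun_cong[OF weight, of m] by (simp add: weight_def)
  have le: "T c \<le> n" if "c \<in> diagram f" for c
  proof (rule ccontr)
    assume "\<not> T c \<le> n"
    then have "(\<beta>(n := k)) (T c) = 0" using \<beta> by simp
    then show False using tableau_entry_weight[OF T that finite_diagram[OF f]] by simp
  qed
  define g where "g = shape_below f T n"
  define T' where "T' = (\<lambda>c. if c \<in> diagram g then T c else 0)"
  have diagram_g: "diagram g = {c \<in> diagram f. T c < n}" using diagram_shape_below[OF ssyt] g_def by simp
  have strip: "horizontal_strip g f" using horizontal_strip_shape_below[OF ssyt dec le] g_def by simp
  have g: "\<forall>i\<ge>K. g i = 0" using horizontal_strip_inner_vanishes[OF strip f] .
  have sub: "diagram g \<subseteq> diagram f" using horizontal_strip_diagram[OF strip] .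
  let ?A = "{c \<in> diagram f. T c < n}" and ?B = "{c \<in> diagram f. T c = n}"
  have "diagram f = ?A \<union> ?B" using le by force
  moreover have "card (?A \<union> ?B) = card ?A + card ?B"
    using finite_diagram[OF f] by (intro card_Un_disjoint) auto
  ultimately have "card (diagram f) = card (diagram g) + k" using card_entry[of n] diagram_g by simp
  then have size: "shape_size g + k = shape_size f" using card_diagram[OF f] card_diagram[OF g] by simp
  have "weight g T' m = \<beta> m" for m
  proof (cases "m < n")
    case True
    then have "{c \<in> diagram g. T' c = m} = {c \<in> diagram f. T c = m}" using diagram_g by (auto simp: T'_def)
    then show ?thesis using card_entry[of m] True by (simp add: weight_def)
  next
    case False
    then have "{c \<in> diagram g. T' c = m} = {}" using diagram_g by (auto simp: T'_def)
    then show ?thesis using False \<beta> unfolding weight_def by (metis card.empty not_less)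
  qed
  then have "T' \<in> tableaux g \<beta>"
    using is_ssyt_restrict[OF ssyt sub horizontal_strip_decreasing(1)[OF strip, THEN allI]]
    by (auto simp: tableaux_def T'_def)
  moreover have "T = fill_strip f g n T'"
  proof
    fix c
    consider "c \<in> diagram g" | "c \<in> diagram f" "c \<notin> diagram g" | "c \<notin> diagram f" by blast
    then show "T c = fill_strip f g n T' c"
    proof cases
      case 2
      then show ?thesis using le[of c] diagram_g by (simp add: fill_strip_def)
    next
      case 3
      then have "T c = 0" using ssyt unfolding is_ssyt_def by blast
      then show ?thesis using 3 sub by (auto simp: fill_strip_def)
    qed (simp add: fill_strip_def T'_def)
  qed
  ultimately show ?thesis using that strip size by blast
qed

theorem schur_fun_branching:
  assumes dec: "\<forall>i. f (Suc i) \<le> f i" and f: "\<forall>i\<ge>K. f i = 0" and \<beta>: "\<forall>j\<ge>n. \<beta> j = 0"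
  shows "schur_fun f (\<beta>(n := k)) = (\<Sum>g\<in>inner_strips f k. schur_fun g \<beta>)"
proof -
  define G where "G = inner_strips f k"
  define E where "E g = fill_strip f g n ` tableaux g \<beta>" for g
  have fin_tableaux: "finite (tableaux g \<beta>)" if "g \<in> G" for g
  proof -
    have "\<forall>i\<ge>K. g i = 0"
      using that horizontal_strip_inner_vanishes[OF _ f] by (simp add: G_def inner_strips_def)
    then show ?thesis using finite_tableaux \<beta> by blast
  qed
  have "tableaux f (\<beta>(n := k)) = (\<Union>g\<in>G. E g)"
    using tableau_eq_fill_strip[OF dec f \<beta>] fill_strip_in_tableaux[OF _ _ f \<beta>]
    by (auto simp: G_def inner_strips_def E_def) blast
  moreover have "E g1 \<inter> E g2 = {}" if "g1 \<in> G" "g2 \<in> G" "g1 \<noteq> g2" for g1 g2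
  proof (rule ccontr)
    assume "E g1 \<inter> E g2 \<noteq> {}"
    then obtain T1 T2 where T: "T1 \<in> tableaux g1 \<beta>" "T2 \<in> tableaux g2 \<beta>"
      "fill_strip f g1 n T1 = fill_strip f g2 n T2" by (auto simp: E_def)
    moreover have "horizontal_strip g1 f" "horizontal_strip g2 f"
      using that(1,2) by (auto simp: G_def inner_strips_def)
    ultimately have "diagram g1 = diagram g2" using fill_strip_less[OF _ f \<beta>] by metis
    then show False using diagram_inject that(3) by blast
  qed
  ultimately have "card (tableaux f (\<beta>(n := k))) = (\<Sum>g\<in>G. card (E g))"
    using finite_inner_strips[OF f] fin_tableaux
    by (simp add: card_UN_disjoint E_def G_def inner_strips_def)
  also have "\<dots> = (\<Sum>g\<in>G. card (tableaux g \<beta>))"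
  proof (rule sum.cong[OF refl])
    fix g
    have "inj_on (fill_strip f g n) (tableaux g \<beta>)" using fill_strip_inject by (meson inj_onI)
    then show "card (E g) = card (tableaux g \<beta>)" by (simp add: E_def card_image)
  qed
  finally show ?thesis unfolding schur_fun_def G_def by simp
qed

section \<open>Pieri's rule\<close>

lemma complete_h_eq_sum:
  assumes "\<forall>i\<ge>N. \<alpha> i = 0"
  shows "complete_h k \<alpha> = (if (\<Sum>i<N. \<alpha> i) = k then 1 else 0)"
proof -
  have "finite {i. \<alpha> i \<noteq> 0}"
    using assms by (metis (mono_tags, lifting) finite_lessThan finite_subset lessThan_iff mem_Collect_eq
        not_le subsetI)
  moreover have "(\<Sum>i | \<alpha> i \<noteq> 0. \<alpha> i) = (\<Sum>i<N. \<alpha> i)"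
    using shape_size_eq_sum[OF assms] by (simp add: shape_size_def)
  ultimately show ?thesis by (simp add: complete_h_def)
qed

lemma complete_h_branching:
  assumes "\<forall>j\<ge>n. \<beta> j = 0"
  shows "complete_h a (\<beta>(n := k)) = (if k \<le> a then complete_h (a - k) \<beta> else 0)"
proof -
  have vanish: "\<forall>i\<ge>Suc n. (\<beta>(n := k)) i = 0" "\<forall>i\<ge>Suc n. \<beta> i = 0" using assms by auto
  have "(\<Sum>i<Suc n. (\<beta>(n := k)) i) = (\<Sum>i<n. \<beta> i) + k" "(\<Sum>i<Suc n. \<beta> i) = (\<Sum>i<n. \<beta> i)"
    using assms by simp_all
  then show ?thesis unfolding complete_h_eq_sum[OF vanish(1)] complete_h_eq_sum[OF vanish(2)] by auto
qed

lemma complete_h_zero: "complete_h a (\<lambda>_. 0) = (if a = 0 then 1 else 0)"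
  using complete_h_eq_sum[of 0 "\<lambda>_. 0" a] by simp

lemma schur_fun_zero:
  assumes "\<forall>i\<ge>K. f i = 0"
  shows "schur_fun f (\<lambda>_. 0) = (if f = (\<lambda>_. 0) then 1 else 0)"
proof (cases "f = (\<lambda>_. 0)")
  case True
  then have "tableaux f (\<lambda>_. 0) = {\<lambda>_. 0}"
    by (auto simp: tableaux_def is_ssyt_def diagram_def weight_def)
  then show ?thesis using True by (simp add: schur_fun_def)
next
  case False
  then obtain i where "(i, 0) \<in> diagram f" by (auto simp: diagram_def)
  then have "tableaux f (\<lambda>_. 0) = {}"
    using tableau_entry_weight[OF _ _ finite_diagram[OF assms]] by blast
  then show ?thesis using False by (simp add: schur_fun_def)
qed

lemma sf_mult_zero: "sf_mult F H (\<lambda>_. 0) = F (\<lambda>_. 0) * H (\<lambda>_. 0)"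
proof -
  have "{\<beta> :: monomial. \<forall>i. \<beta> i \<le> 0} = {\<lambda>_. 0}" by auto
  then show ?thesis by (simp add: sf_mult_def)
qed

lemma sf_mult_split:
  assumes "\<alpha> n = 0"
  shows "sf_mult F H (\<alpha>(n := m)) =
    (\<Sum>k\<le>m. \<Sum>\<beta> | \<forall>i. \<beta> i \<le> \<alpha> i. F (\<beta>(n := k)) * H ((\<lambda>i. \<alpha> i - \<beta> i)(n := m - k)))"
proof -
  define B where "B = {\<beta>. \<forall>i. \<beta> i \<le> \<alpha> i}"
  have B_n: "\<beta> n = 0" if "\<beta> \<in> B" for \<beta> using that assms by (metis B_def le_zero_eq mem_Collect_eq)
  have bij: "bij_betw (\<lambda>(k, \<beta>). \<beta>(n := k)) ({..m} \<times> B) {\<gamma>. \<forall>i. \<gamma> i \<le> (\<alpha>(n := m)) i}"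
  proof (rule bij_betw_byWitness[where f' = "\<lambda>\<gamma>. (\<gamma> n, \<gamma>(n := 0))"])
    show "\<forall>x\<in>{..m} \<times> B. (\<lambda>\<gamma>. (\<gamma> n, \<gamma>(n := 0))) ((\<lambda>(k, \<beta>). \<beta>(n := k)) x) = x"
      using B_n by (auto simp: fun_upd_idem)
    show "(\<lambda>(k, \<beta>). \<beta>(n := k)) ` ({..m} \<times> B) \<subseteq> {\<gamma>. \<forall>i. \<gamma> i \<le> (\<alpha>(n := m)) i}"
      by (auto simp: B_def)
    show "(\<lambda>\<gamma>. (\<gamma> n, \<gamma>(n := 0))) ` {\<gamma>. \<forall>i. \<gamma> i \<le> (\<alpha>(n := m)) i} \<subseteq> {..m} \<times> B"
      using assms by (auto simp: B_def)
  qed simp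
  have diff: "(\<lambda>i. (if i = n then m else \<alpha> i) - (if i = n then k else \<beta> i)) =
      (\<lambda>i. \<alpha> i - \<beta> i)(n := m - k)" for \<beta> k
    by auto
  have "sf_mult F H (\<alpha>(n := m)) =
      (\<Sum>x\<in>{..m} \<times> B. F (case x of (k, \<beta>) \<Rightarrow> \<beta>(n := k)) *
         H (\<lambda>i. (\<alpha>(n := m)) i - (case x of (k, \<beta>) \<Rightarrow> \<beta>(n := k)) i))"
    unfolding sf_mult_def
    by (rule sum.reindex_bij_betw[OF bij, of "\<lambda>\<gamma>. F \<gamma> * H (\<lambda>i. (\<alpha>(n := m)) i - \<gamma> i)", symmetric])
  also have "\<dots> = (\<Sum>(k, \<beta>)\<in>{..m} \<times> B. F (\<beta>(n := k)) * H ((\<lambda>i. \<alpha> i - \<beta> i)(n := m - k)))"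
    by (rule sum.cong) (auto simp: diff)
  also have "\<dots> = (\<Sum>k\<le>m. \<Sum>\<beta>\<in>B. F (\<beta>(n := k)) * H ((\<lambda>i. \<alpha> i - \<beta> i)(n := m - k)))"
    by (simp add: sum.cartesian_product)
  finally show ?thesis unfolding B_def .
qed

text \<open>Given \<open>\<mu>\<close> and \<open>\<nu>\<close>, the parts \<open>\<rho> i\<close> of a common inner shape and \<open>l (i + 1)\<close> of a
  common outer shape both range over \<open>[max (\<mu> (i + 1)) (\<nu> (i + 1)), min (\<mu> i) (\<nu> i)]\<close>;
  reflecting one into the other, and recording the difference in \<open>l 0\<close>, matches the two ways
  of adding and removing horizontal strips.\<close>

definition reflect_up :: "(nat \<Rightarrow> nat) \<Rightarrow> (nat \<Rightarrow> nat) \<Rightarrow> nat \<Rightarrow> (nat \<Rightarrow> nat) \<Rightarrow> nat \<Rightarrow> nat" where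
  "reflect_up \<mu> \<nu> e \<rho> i = (if i = 0 then max (\<mu> 0) (\<nu> 0) + e
     else max (\<mu> i) (\<nu> i) + min (\<mu> (i - 1)) (\<nu> (i - 1)) - \<rho> (i - 1))"

definition reflect_down :: "(nat \<Rightarrow> nat) \<Rightarrow> (nat \<Rightarrow> nat) \<Rightarrow> (nat \<Rightarrow> nat) \<Rightarrow> nat \<Rightarrow> nat" where
  "reflect_down \<mu> \<nu> l i = max (\<mu> (Suc i)) (\<nu> (Suc i)) + min (\<mu> i) (\<nu> i) - l (Suc i)"

lemma shape_size_reflection:
  fixes l \<rho> \<mu> \<nu> :: "nat \<Rightarrow> nat"
  assumes reflect: "\<forall>i. l (Suc i) + \<rho> i = max (\<mu> (Suc i)) (\<nu> (Suc i)) + min (\<mu> i) (\<nu> i)"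
    and vanish: "\<forall>i\<ge>K. \<mu> i = 0" "\<forall>i\<ge>K. \<nu> i = 0" "\<forall>i\<ge>K. \<rho> i = 0"
  shows "shape_size l + shape_size \<rho> + max (\<mu> 0) (\<nu> 0) = l 0 + shape_size \<mu> + shape_size \<nu>"
proof -
  have l_vanish: "\<forall>i\<ge>Suc K. l i = 0"
  proof (intro allI impI)
    fix i assume "Suc K \<le> i"
    then obtain j where "i = Suc j" "K \<le> j" by (metis Suc_le_D Suc_le_mono)
    then show "l i = 0" using reflect[rule_format, of j] vanish by simp
  qed
  have "shape_size l = l 0 + (\<Sum>i<K. l (Suc i))"
    unfolding shape_size_eq_sum[OF l_vanish] by (rule sum.lessThan_Suc_shift)
  moreover have "(\<Sum>i<K. l (Suc i)) + shape_size \<rho> =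
      (\<Sum>i<K. max (\<mu> (Suc i)) (\<nu> (Suc i))) + (\<Sum>i<K. min (\<mu> i) (\<nu> i))"
    unfolding shape_size_eq_sum[OF vanish(3)] using reflect by (simp add: sum.distrib[symmetric])
  moreover have "max (\<mu> 0) (\<nu> 0) + (\<Sum>i<K. max (\<mu> (Suc i)) (\<nu> (Suc i))) = (\<Sum>i<K. max (\<mu> i) (\<nu> i))"
    using sum.lessThan_Suc_shift[of "\<lambda>i. max (\<mu> i) (\<nu> i)" K] vanish by simp
  moreover have "(\<Sum>i<K. max (\<mu> i) (\<nu> i)) + (\<Sum>i<K. min (\<mu> i) (\<nu> i)) = shape_size \<mu> + shape_size \<nu>"
    unfolding shape_size_eq_sum[OF vanish(1)] shape_size_eq_sum[OF vanish(2)] sum.distrib[symmetric]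
    by (rule sum.cong) (auto simp: max_def min_def)
  ultimately show ?thesis by linarith
qed

definition lower_strip_data :: "(nat \<Rightarrow> nat) \<Rightarrow> nat \<Rightarrow> nat \<Rightarrow> (nat \<times> (nat \<Rightarrow> nat) \<times> (nat \<Rightarrow> nat)) set" where
  "lower_strip_data \<mu> m a =
     (SIGMA k:{k. k \<le> m \<and> m - k \<le> a}. SIGMA \<rho>:inner_strips \<mu> k. outer_strips \<rho> (a - (m - k)))"

definition upper_strip_data :: "(nat \<Rightarrow> nat) \<Rightarrow> nat \<Rightarrow> nat \<Rightarrow> ((nat \<Rightarrow> nat) \<times> (nat \<Rightarrow> nat)) set" where
  "upper_strip_data \<mu> m a = (SIGMA l:outer_strips \<mu> a. inner_strips l m)"

lemma reflect_up_in_upper_strip_data: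
  assumes vanish: "\<forall>i\<ge>K. \<mu> i = 0" and x: "(k, \<rho>, \<nu>) \<in> lower_strip_data \<mu> m a"
  defines "l \<equiv> reflect_up \<mu> \<nu> (m - k) \<rho>"
  shows "(l, \<nu>) \<in> upper_strip_data \<mu> m a" "reflect_down \<mu> \<nu> l = \<rho>"
    "m - (l 0 - max (\<mu> 0) (\<nu> 0)) = k"
proof -
  have k: "k \<le> m" "m - k \<le> a"
    and \<rho>\<mu>: "horizontal_strip \<rho> \<mu>" "shape_size \<rho> + k = shape_size \<mu>"
    and \<rho>\<nu>: "horizontal_strip \<rho> \<nu>" "shape_size \<nu> = shape_size \<rho> + (a - (m - k))"
    using x by (auto simp: lower_strip_data_def inner_strips_def outer_strips_def)
  have bounds: "max (\<mu> (Suc i)) (\<nu> (Suc i)) \<le> \<rho> i" "\<rho> i \<le> min (\<mu> i) (\<nu> i)" for i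
    using \<rho>\<mu>(1) \<rho>\<nu>(1) unfolding horizontal_strip_def by auto
  have l_Suc: "l (Suc i) = max (\<mu> (Suc i)) (\<nu> (Suc i)) + min (\<mu> i) (\<nu> i) - \<rho> i" for i
    by (simp add: l_def reflect_up_def)
  have l_0: "l 0 = max (\<mu> 0) (\<nu> 0) + (m - k)" by (simp add: l_def reflect_up_def)
  have reflect: "\<forall>i. l (Suc i) + \<rho> i = max (\<mu> (Suc i)) (\<nu> (Suc i)) + min (\<mu> i) (\<nu> i)"
    using bounds l_Suc by (metis le_add2 le_add_diff_inverse2 le_trans)
  have between: "max (\<mu> (Suc i)) (\<nu> (Suc i)) \<le> l (Suc i)" "l (Suc i) \<le> min (\<mu> i) (\<nu> i)" for i
    using bounds[of i] l_Suc[of i] by auto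
  have "\<mu> i \<le> l i \<and> \<nu> i \<le> l i" for i
    using l_0 between(1) by (cases i) auto
  then have strips: "horizontal_strip \<mu> l" "horizontal_strip \<nu> l"
    unfolding horizontal_strip_def using between(2) by auto
  have \<rho>_vanish: "\<forall>i\<ge>K. \<rho> i = 0" using horizontal_strip_inner_vanishes[OF \<rho>\<mu>(1) vanish] .
  then have "\<forall>i\<ge>Suc K. \<mu> i = 0" "\<forall>i\<ge>Suc K. \<nu> i = 0" "\<forall>i\<ge>Suc K. \<rho> i = 0"
    using vanish horizontal_strip_outer_vanishes[OF \<rho>\<nu>(1)] by auto
  then have "shape_size l + shape_size \<rho> + max (\<mu> 0) (\<nu> 0) = l 0 + shape_size \<mu> + shape_size \<nu>"
    using shape_size_reflection[OF reflect] by blast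
  then have "shape_size l = shape_size \<mu> + a" "shape_size \<nu> + m = shape_size l"
    using l_0 \<rho>\<mu>(2) \<rho>\<nu>(2) k by linarith+
  then show "(l, \<nu>) \<in> upper_strip_data \<mu> m a"
    using strips by (simp add: upper_strip_data_def inner_strips_def outer_strips_def)
  show "reflect_down \<mu> \<nu> l = \<rho>"
  proof
    fix i
    show "reflect_down \<mu> \<nu> l i = \<rho> i"
      using reflect[rule_format, of i] unfolding reflect_down_def by linarith
  qed
  show "m - (l 0 - max (\<mu> 0) (\<nu> 0)) = k" using l_0 k by simp
qed

lemma reflect_down_in_lower_strip_data:
  assumes vanish: "\<forall>i\<ge>K. \<mu> i = 0" and y: "(l, \<nu>) \<in> upper_strip_data \<mu> m a"
  defines "\<rho> \<equiv> reflect_down \<mu> \<nu> l" and "k \<equiv> m - (l 0 - max (\<mu> 0) (\<nu> 0))"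
  shows "(k, \<rho>, \<nu>) \<in> lower_strip_data \<mu> m a" "reflect_up \<mu> \<nu> (m - k) \<rho> = l"
proof -
  have \<mu>l: "horizontal_strip \<mu> l" "shape_size l = shape_size \<mu> + a"
    and \<nu>l: "horizontal_strip \<nu> l" "shape_size \<nu> + m = shape_size l"
    using y by (auto simp: upper_strip_data_def inner_strips_def outer_strips_def)
  have bounds: "max (\<mu> (Suc i)) (\<nu> (Suc i)) \<le> l (Suc i)" "l (Suc i) \<le> min (\<mu> i) (\<nu> i)" for i
    using \<mu>l(1) \<nu>l(1) unfolding horizontal_strip_def by auto
  have \<rho>_def': "\<rho> i = max (\<mu> (Suc i)) (\<nu> (Suc i)) + min (\<mu> i) (\<nu> i) - l (Suc i)" for i
    by (simp add: \<rho>_def reflect_down_def)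
  have reflect: "\<forall>i. l (Suc i) + \<rho> i = max (\<mu> (Suc i)) (\<nu> (Suc i)) + min (\<mu> i) (\<nu> i)"
    using bounds \<rho>_def' by (metis le_add2 le_add_diff_inverse le_trans)
  have "max (\<mu> (Suc i)) (\<nu> (Suc i)) \<le> \<rho> i \<and> \<rho> i \<le> min (\<mu> i) (\<nu> i)" for i
    using bounds[of i] \<rho>_def'[of i] by auto
  then have strips: "horizontal_strip \<rho> \<mu>" "horizontal_strip \<rho> \<nu>"
    unfolding horizontal_strip_def by auto
  have l_0: "max (\<mu> 0) (\<nu> 0) \<le> l 0" using \<mu>l(1) \<nu>l(1) unfolding horizontal_strip_def by auto
  have \<nu>_vanish: "\<forall>i\<ge>Suc K. \<nu> i = 0"
    using horizontal_strip_outer_vanishes[OF \<mu>l(1) vanish] horizontal_strip_inner_vanishes[OF \<nu>l(1)]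
    by blast
  have \<rho>_vanish: "\<forall>i\<ge>K. \<rho> i = 0" using horizontal_strip_inner_vanishes[OF strips(1) vanish] .
  have "\<forall>i\<ge>Suc K. \<mu> i = 0" "\<forall>i\<ge>Suc K. \<rho> i = 0" using vanish \<rho>_vanish by auto
  then have "shape_size l + shape_size \<rho> + max (\<mu> 0) (\<nu> 0) = l 0 + shape_size \<mu> + shape_size \<nu>"
    using shape_size_reflection[OF reflect _ \<nu>_vanish] by blast
  moreover have "shape_size \<rho> \<le> shape_size \<mu>" "shape_size \<rho> \<le> shape_size \<nu>"
    using strips shape_size_mono vanish \<nu>_vanish unfolding horizontal_strip_def by blast+
  ultimately have "shape_size \<rho> + k = shape_size \<mu>" "k \<le> m" "m - k \<le> a"
    "shape_size \<nu> = shape_size \<rho> + (a - (m - k))" "m - k = l 0 - max (\<mu> 0) (\<nu> 0)"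
    using \<mu>l(2) \<nu>l(2) l_0 unfolding k_def by linarith+
  then show "(k, \<rho>, \<nu>) \<in> lower_strip_data \<mu> m a"
    using strips by (simp add: lower_strip_data_def inner_strips_def outer_strips_def)
  show "reflect_up \<mu> \<nu> (m - k) \<rho> = l"
  proof
    fix i
    show "reflect_up \<mu> \<nu> (m - k) \<rho> i = l i"
    proof (cases i)
      case 0
      then show ?thesis using \<open>m - k = l 0 - max (\<mu> 0) (\<nu> 0)\<close> l_0 by (simp add: reflect_up_def)
    next
      case (Suc j)
      have "reflect_up \<mu> \<nu> (m - k) \<rho> (Suc j) = max (\<mu> (Suc j)) (\<nu> (Suc j)) + min (\<mu> j) (\<nu> j) - \<rho> j"
        by (simp add: reflect_up_def)
      then show ?thesis using reflect[rule_format, of j] unfolding Suc by linarith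
    qed
  qed
qed

lemma bij_betw_reflect_up:
  assumes "\<forall>i\<ge>K. \<mu> i = 0"
  shows "bij_betw (\<lambda>(k, \<rho>, \<nu>). (reflect_up \<mu> \<nu> (m - k) \<rho>, \<nu>))
    (lower_strip_data \<mu> m a) (upper_strip_data \<mu> m a)"
proof (rule bij_betw_byWitness[where f' = "\<lambda>(l, \<nu>). (m - (l 0 - max (\<mu> 0) (\<nu> 0)), reflect_down \<mu> \<nu> l, \<nu>)"])
qed (use reflect_up_in_upper_strip_data[OF assms] reflect_down_in_lower_strip_data[OF assms] in auto)

theorem sum_horizontal_strips_commute:
  fixes F :: "(nat \<Rightarrow> nat) \<Rightarrow> int"
  assumes vanish: "\<forall>i\<ge>K. \<mu> i = 0"
  shows "(\<Sum>k | k \<le> m \<and> m - k \<le> a. \<Sum>\<rho>\<in>inner_strips \<mu> k. \<Sum>\<nu>\<in>outer_strips \<rho> (a - (m - k)). F \<nu>)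
       = (\<Sum>l\<in>outer_strips \<mu> a. \<Sum>\<nu>\<in>inner_strips l m. F \<nu>)"
proof -
  have fin_k: "finite {k. k \<le> m \<and> m - k \<le> a}" by (rule finite_subset[of _ "{..m}"]) auto
  have fin_outer_inner: "finite (outer_strips \<rho> j)" if "\<rho> \<in> inner_strips \<mu> k" for \<rho> k j
  proof -
    have "\<forall>i\<ge>K. \<rho> i = 0"
      using that horizontal_strip_inner_vanishes[OF _ vanish] by (simp add: inner_strips_def)
    then show ?thesis by (rule finite_outer_strips)
  qed
  have fin_inner_outer: "finite (inner_strips l j)" if "l \<in> outer_strips \<mu> k" for l k j
  proof -
    have "\<forall>i\<ge>Suc K. l i = 0"
      using that horizontal_strip_outer_vanishes[OF _ vanish] by (simp add: outer_strips_def)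
    then show ?thesis by (rule finite_inner_strips)
  qed
  have "(\<Sum>k | k \<le> m \<and> m - k \<le> a. \<Sum>\<rho>\<in>inner_strips \<mu> k. \<Sum>\<nu>\<in>outer_strips \<rho> (a - (m - k)). F \<nu>)
      = (\<Sum>k | k \<le> m \<and> m - k \<le> a.
           \<Sum>(\<rho>, \<nu>)\<in>(SIGMA \<rho>:inner_strips \<mu> k. outer_strips \<rho> (a - (m - k))). F \<nu>)"
    using finite_inner_strips[OF vanish] fin_outer_inner by (intro sum.cong refl sum.Sigma) auto
  also have "\<dots> = (\<Sum>(k, \<rho>, \<nu>)\<in>lower_strip_data \<mu> m a. F \<nu>)"
    unfolding lower_strip_data_def using fin_k finite_inner_strips[OF vanish] fin_outer_inner
    by (intro sum.Sigma ballI finite_SigmaI) auto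
  also have "\<dots> = (\<Sum>(l, \<nu>)\<in>upper_strip_data \<mu> m a. F \<nu>)"
    using sum.reindex_bij_betw[OF bij_betw_reflect_up[OF vanish], of "\<lambda>(l, \<nu>). F \<nu>"]
    by (simp add: case_prod_beta)
  also have "\<dots> = (\<Sum>l\<in>outer_strips \<mu> a. \<Sum>\<nu>\<in>inner_strips l m. F \<nu>)"
    unfolding upper_strip_data_def using finite_outer_strips[OF vanish] fin_inner_outer
    by (intro sum.Sigma[symmetric] ballI) auto
  finally show ?thesis .
qed

lemma pieri_rule_zero_weight:
  assumes "\<forall>i\<ge>K. \<mu> i = 0"
  shows "sf_mult (schur_fun \<mu>) (complete_h a) (\<lambda>_. 0) = (\<Sum>l\<in>outer_strips \<mu> a. schur_fun l (\<lambda>_. 0))"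
proof -
  have "(\<Sum>l\<in>outer_strips \<mu> a. schur_fun l (\<lambda>_. 0)) =
      (\<Sum>l\<in>outer_strips \<mu> a. if l = (\<lambda>_. 0) then 1 else 0)"
  proof (rule sum.cong[OF refl])
    fix l assume "l \<in> outer_strips \<mu> a"
    then have "\<forall>i\<ge>Suc K. l i = 0"
      using horizontal_strip_outer_vanishes[OF _ assms] by (simp add: outer_strips_def)
    then show "schur_fun l (\<lambda>_. 0) = (if l = (\<lambda>_. 0) then 1 else 0)" by (rule schur_fun_zero)
  qed
  also have "\<dots> = (if (\<lambda>_. 0) \<in> outer_strips \<mu> a then 1 else 0)"
    using finite_outer_strips[OF assms] by simp
  also have "\<dots> = (if \<mu> = (\<lambda>_. 0) \<and> a = 0 then 1 else 0)"
    by (auto simp: outer_strips_def horizontal_strip_def shape_size_def)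
  finally show ?thesis unfolding sf_mult_zero schur_fun_zero[OF assms] complete_h_zero by simp
qed

lemma sum_schur_fun_complete_h_branching:
  assumes dec: "\<forall>i. \<mu> (Suc i) \<le> \<mu> i" and vanish: "\<forall>i\<ge>K. \<mu> i = 0" and \<alpha>: "\<forall>j\<ge>n. \<alpha> j = 0"
  shows "(\<Sum>\<beta> | \<forall>i. \<beta> i \<le> \<alpha> i. schur_fun \<mu> (\<beta>(n := k)) * complete_h a ((\<lambda>i. \<alpha> i - \<beta> i)(n := e))) =
    (if e \<le> a then \<Sum>\<rho>\<in>inner_strips \<mu> k. sf_mult (schur_fun \<rho>) (complete_h (a - e)) \<alpha> else 0)"
proof -
  define B where "B = {\<beta>. \<forall>i. \<beta> i \<le> \<alpha> i}"
  have \<beta>: "\<forall>j\<ge>n. \<beta> j = 0" if "\<beta> \<in> B" for \<beta>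
    using that \<alpha> by (metis B_def le_zero_eq mem_Collect_eq)
  have "(\<Sum>\<beta>\<in>B. schur_fun \<mu> (\<beta>(n := k)) * complete_h a ((\<lambda>i. \<alpha> i - \<beta> i)(n := e))) =
      (\<Sum>\<beta>\<in>B. (\<Sum>\<rho>\<in>inner_strips \<mu> k. schur_fun \<rho> \<beta>) *
         (if e \<le> a then complete_h (a - e) (\<lambda>i. \<alpha> i - \<beta> i) else 0))"
    using schur_fun_branching[OF dec vanish] complete_h_branching \<alpha> \<beta>
    by (intro sum.cong refl) simp
  also have "\<dots> = (if e \<le> a then \<Sum>\<beta>\<in>B. \<Sum>\<rho>\<in>inner_strips \<mu> k.
      schur_fun \<rho> \<beta> * complete_h (a - e) (\<lambda>i. \<alpha> i - \<beta> i) else 0)"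
    by (simp add: sum_distrib_right)
  also have "\<dots> = (if e \<le> a then \<Sum>\<rho>\<in>inner_strips \<mu> k. sf_mult (schur_fun \<rho>) (complete_h (a - e)) \<alpha>
      else 0)"
    unfolding sf_mult_def B_def by (simp add: sum.swap[of _ _ "inner_strips \<mu> k"])
  finally show ?thesis unfolding B_def .
qed

text \<open>Induction on the number of variables: split off the last variable with the branching
  rule on both sides and exchange the order of adding and removing horizontal strips.\<close>

lemma pieri_rule_finite_support:
  assumes "\<forall>i. \<mu> (Suc i) \<le> \<mu> i" "\<forall>i\<ge>K. \<mu> i = 0" "\<forall>j\<ge>n. \<alpha> j = 0"
  shows "sf_mult (schur_fun \<mu>) (complete_h a) \<alpha> = (\<Sum>l\<in>outer_strips \<mu> a. schur_fun l \<alpha>)"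
  using assms
proof (induction n arbitrary: \<mu> K a \<alpha>)
  case 0
  then have "\<alpha> = (\<lambda>_. 0)" by auto
  then show ?case using pieri_rule_zero_weight[OF "0.prems"(2)] by simp
next
  case (Suc n)
  note \<mu>_dec = Suc.prems(1) and \<mu>_vanish = Suc.prems(2)
  define m where "m = \<alpha> n"
  define \<alpha>' where "\<alpha>' = \<alpha>(n := 0)"
  have \<alpha>: "\<alpha> = \<alpha>'(n := m)" by (simp add: \<alpha>'_def m_def)
  have \<alpha>'_vanish: "\<forall>j\<ge>n. \<alpha>' j = 0" using Suc.prems(3) by (simp add: \<alpha>'_def)
  have IH: "sf_mult (schur_fun \<rho>) (complete_h b) \<alpha>' = (\<Sum>\<nu>\<in>outer_strips \<rho> b. schur_fun \<nu> \<alpha>')"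
    if "\<rho> \<in> inner_strips \<mu> k" for \<rho> k b
  proof (rule Suc.IH[OF _ _ \<alpha>'_vanish])
    have strip: "horizontal_strip \<rho> \<mu>" using that by (simp add: inner_strips_def)
    show "\<forall>i. \<rho> (Suc i) \<le> \<rho> i" using horizontal_strip_decreasing(1)[OF strip] by blast
    show "\<forall>i\<ge>K. \<rho> i = 0" using horizontal_strip_inner_vanishes[OF strip \<mu>_vanish] .
  qed
  have "sf_mult (schur_fun \<mu>) (complete_h a) \<alpha> = (\<Sum>k\<le>m. \<Sum>\<beta> | \<forall>i. \<beta> i \<le> \<alpha>' i.
      schur_fun \<mu> (\<beta>(n := k)) * complete_h a ((\<lambda>i. \<alpha>' i - \<beta> i)(n := m - k)))"
    unfolding \<alpha> using \<alpha>'_vanish by (simp add: sf_mult_split)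
  also have "\<dots> = (\<Sum>k | k \<le> m \<and> m - k \<le> a.
      \<Sum>\<rho>\<in>inner_strips \<mu> k. sf_mult (schur_fun \<rho>) (complete_h (a - (m - k))) \<alpha>')"
    unfolding sum_schur_fun_complete_h_branching[OF \<mu>_dec \<mu>_vanish \<alpha>'_vanish]
    by (simp add: sum.inter_filter[symmetric] conj_commute)
  also have "\<dots> = (\<Sum>k | k \<le> m \<and> m - k \<le> a.
      \<Sum>\<rho>\<in>inner_strips \<mu> k. \<Sum>\<nu>\<in>outer_strips \<rho> (a - (m - k)). schur_fun \<nu> \<alpha>')"
    using IH by simp
  also have "\<dots> = (\<Sum>l\<in>outer_strips \<mu> a. \<Sum>\<nu>\<in>inner_strips l m. schur_fun \<nu> \<alpha>')"
    by (rule sum_horizontal_strips_commute[OF \<mu>_vanish])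
  also have "\<dots> = (\<Sum>l\<in>outer_strips \<mu> a. schur_fun l \<alpha>)"
  proof (rule sum.cong[OF refl])
    fix l assume "l \<in> outer_strips \<mu> a"
    then have strip: "horizontal_strip \<mu> l" by (simp add: outer_strips_def)
    show "(\<Sum>\<nu>\<in>inner_strips l m. schur_fun \<nu> \<alpha>') = schur_fun l \<alpha>"
      unfolding \<alpha> using horizontal_strip_decreasing(2)[OF strip]
        schur_fun_branching[OF _ horizontal_strip_outer_vanishes[OF strip \<mu>_vanish] \<alpha>'_vanish]
      by simp
  qed
  finally show ?case .
qed

lemma schur_fun_infinite_support:
  assumes "infinite {i. \<alpha> i \<noteq> 0}" "\<forall>i\<ge>K. f i = 0"
  shows "schur_fun f \<alpha> = 0"
proof -
  have "{i. \<alpha> i \<noteq> 0} \<subseteq> T ` diagram f" if "T \<in> tableaux f \<alpha>" for T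
  proof
    fix k assume "k \<in> {i. \<alpha> i \<noteq> 0}"
    then have "card {c \<in> diagram f. T c = k} \<noteq> 0" using that by (auto simp: tableaux_def weight_def)
    then have "{c \<in> diagram f. T c = k} \<noteq> {}" by (metis card.empty)
    then show "k \<in> T ` diagram f" by blast
  qed
  then have "tableaux f \<alpha> = {}"
    using assms finite_diagram[OF assms(2)] by (meson equals0I finite_imageI finite_subset)
  then show ?thesis by (simp add: schur_fun_def)
qed

lemma sf_mult_infinite_support:
  assumes "infinite {i. \<alpha> i \<noteq> 0}"
  shows "sf_mult F H \<alpha> = 0"
proof -
  let ?e = "\<lambda>i j. if j = i then 1 else 0 :: nat"
  have "inj_on ?e {i. \<alpha> i \<noteq> 0}" by (rule inj_onI) (metis zero_neq_one)
  moreover have "?e ` {i. \<alpha> i \<noteq> 0} \<subseteq> {\<beta>. \<forall>i. \<beta> i \<le> \<alpha> i}" by auto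
  ultimately have "infinite {\<beta>. \<forall>i. \<beta> i \<le> \<alpha> i}" using assms by (meson finite_imageD finite_subset)
  then show ?thesis unfolding sf_mult_def by simp
qed

theorem pieri_rule_fun:
  assumes "\<forall>i. \<mu> (Suc i) \<le> \<mu> i" "\<forall>i\<ge>K. \<mu> i = 0"
  shows "sf_mult (schur_fun \<mu>) (complete_h a) = (\<lambda>\<alpha>. \<Sum>l\<in>outer_strips \<mu> a. schur_fun l \<alpha>)"
proof
  fix \<alpha> :: monomial
  show "sf_mult (schur_fun \<mu>) (complete_h a) \<alpha> = (\<Sum>l\<in>outer_strips \<mu> a. schur_fun l \<alpha>)"
  proof (cases "finite {i. \<alpha> i \<noteq> 0}")
    case True
    then obtain n where "\<forall>j\<ge>n. \<alpha> j = 0"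
      by (metis (mono_tags, lifting) finite_nat_set_iff_bounded leD mem_Collect_eq)
    then show ?thesis using pieri_rule_finite_support assms by blast
  next
    case False
    have "schur_fun l \<alpha> = 0" if "l \<in> outer_strips \<mu> a" for l
    proof -
      have "horizontal_strip \<mu> l" using that by (simp add: outer_strips_def)
      then show ?thesis
        using horizontal_strip_outer_vanishes[OF _ assms(2)] schur_fun_infinite_support[OF False] by blast
    qed
    then show ?thesis using sf_mult_infinite_support[OF False] by simp
  qed
qed

definition pieri_partitions :: "nat list \<Rightarrow> nat \<Rightarrow> nat list set" where
  "pieri_partitions mu a =
     {lam \<in> partitions_of (sum_list mu + a). horizontal_strip (shape mu) (shape lam)}"

theorem pieri_rule:
  assumes "is_partition mu"
  shows "sf_mult (schur mu) (complete_h a) = (\<lambda>\<alpha>. \<Sum>lam\<in>pieri_partitions mu a. schur lam \<alpha>)"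
proof -
  have "bij_betw shape (pieri_partitions mu a) (outer_strips (shape mu) a)"
  proof (rule bij_betw_imageI)
    show "inj_on shape (pieri_partitions mu a)"
      using shape_inject by (auto simp: pieri_partitions_def partitions_of_def inj_on_def)
    show "shape ` pieri_partitions mu a = outer_strips (shape mu) a"
    proof
      show "shape ` pieri_partitions mu a \<subseteq> outer_strips (shape mu) a"
        by (auto simp: pieri_partitions_def partitions_of_def outer_strips_def shape_size_shape)
      show "outer_strips (shape mu) a \<subseteq> shape ` pieri_partitions mu a"
      proof
        fix l assume l: "l \<in> outer_strips (shape mu) a"
        then have strip: "horizontal_strip (shape mu) l" by (simp add: outer_strips_def)
        note l_shape = partition_of_shape[OF horizontal_strip_decreasing(2)[OF strip, THEN allI]
            horizontal_strip_outer_vanishes[OF strip shape_vanishes]]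
        have "partition_of_shape l \<in> pieri_partitions mu a"
          using l l_shape by (simp add: pieri_partitions_def partitions_of_def outer_strips_def
              shape_size_shape[symmetric] shape_eq_0)
        then show "l \<in> shape ` pieri_partitions mu a" using l_shape(1)[symmetric] by (rule rev_image_eqI)
      qed
    qed
  qed
  then have "(\<Sum>lam\<in>pieri_partitions mu a. schur_fun (shape lam) \<alpha>) =
      (\<Sum>l\<in>outer_strips (shape mu) a. schur_fun l \<alpha>)" for \<alpha>
    by (rule sum.reindex_bij_betw)
  then show ?thesis
    unfolding schur_eq_schur_fun pieri_rule_fun[OF shape_decreasing[OF assms, THEN allI] shape_vanishes]
    by simp
qed

section \<open>Linear independence of Schur functions\<close>

lemma tableau_weight_dominated:
  assumes dec: "\<forall>i. f (Suc i) \<le> f i" and vanish: "\<forall>i\<ge>K. f i = 0" and T: "T \<in> tableaux f \<alpha>"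
  shows "(\<Sum>t\<le>k. \<alpha> t) \<le> (\<Sum>i\<le>k. f i)"
proof -
  have ssyt: "is_ssyt f T" and weight: "weight f T = \<alpha>" using T by (auto simp: tableaux_def)
  have fin: "finite (diagram f)" using finite_diagram[OF vanish] .
  have "(\<Sum>t\<le>k. \<alpha> t) = (\<Sum>t\<le>k. card {c \<in> diagram f. T c = t})"
    using weight unfolding weight_def by auto
  also have "\<dots> = card (\<Union>t\<le>k. {c \<in> diagram f. T c = t})"
    by (rule card_UN_disjoint[symmetric]) (use fin in auto)
  also have "(\<Union>t\<le>k. {c \<in> diagram f. T c = t}) = {c \<in> diagram f. T c \<le> k}" by auto
  also have "card {c \<in> diagram f. T c \<le> k} \<le> card {c \<in> diagram f. fst c \<le> k}"
  proof (rule card_mono)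
    have "fst c \<le> k" if "c \<in> diagram f" "T c \<le> k" for c
      using ssyt_column_ge[OF ssyt dec, of "fst c" "snd c"] that by simp
    then show "{c \<in> diagram f. T c \<le> k} \<subseteq> {c \<in> diagram f. fst c \<le> k}" by blast
  qed (use fin in simp)
  also have "{c \<in> diagram f. fst c \<le> k} = Sigma {..k} (\<lambda>i. {..<f i})" by (auto simp: diagram_def)
  finally show ?thesis by simp
qed

lemma schur_fun_self_nonzero:
  assumes dec: "\<forall>i. f (Suc i) \<le> f i" and vanish: "\<forall>i\<ge>K. f i = 0"
  shows "schur_fun f f \<noteq> 0"
proof -
  define T where "T = (\<lambda>(i, j). if j < f i then i else 0)"
  have "is_ssyt f T"
    using dec by (auto simp: is_ssyt_def T_def diagram_def intro: less_le_trans)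
  moreover have "{c \<in> diagram f. T c = t} = {t} \<times> {..<f t}" for t
    by (auto simp: T_def diagram_def)
  ultimately have "T \<in> tableaux f f" by (simp add: tableaux_def weight_def)
  then show ?thesis using finite_tableaux[OF vanish vanish] by (auto simp: schur_fun_def)
qed

text \<open>Summing the partial sums gives a linear extension of the dominance order.\<close>

definition dominance_weight :: "nat \<Rightarrow> (nat \<Rightarrow> nat) \<Rightarrow> nat" where
  "dominance_weight W f = (\<Sum>k<W. \<Sum>i\<le>k. f i)"

lemma dominance_weight_mono:
  "\<forall>k. (\<Sum>i\<le>k. g i) \<le> (\<Sum>i\<le>k. f i) \<Longrightarrow> dominance_weight W g \<le> dominance_weight W f"
  unfolding dominance_weight_def by (simp add: sum_mono)

lemma dominance_weight_less:
  assumes dom: "\<forall>k. (\<Sum>i\<le>k. g i) \<le> (\<Sum>i\<le>k. f i)" and "g \<noteq> f"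
    and "\<forall>i\<ge>W. f i = 0" "\<forall>i\<ge>W. g i = 0"
  shows "dominance_weight W g < dominance_weight W f"
proof (rule ccontr)
  assume "\<not> ?thesis"
  then have "dominance_weight W g = dominance_weight W f"
    using dominance_weight_mono[OF dom, of W] by simp
  then have partial: "(\<Sum>i\<le>k. g i) = (\<Sum>i\<le>k. f i)" if "k < W" for k
    using sum_mono_inv[of "\<lambda>k. \<Sum>i\<le>k. g i" "{..<W}" "\<lambda>k. \<Sum>i\<le>k. f i" k] dom that
    by (auto simp: dominance_weight_def)
  have "g i = f i" for i
  proof (cases "i < W")
    case True
    then show ?thesis
      using partial[of i] partial[of "i - 1"] by (cases i) auto
  qed (use assms in simp)
  then show False using \<open>g \<noteq> f\<close> by blast
qed

lemma schur_nonzero_dominated: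
  assumes "is_partition mu" "schur mu \<alpha> \<noteq> 0"
  shows "(\<Sum>i\<le>k. \<alpha> i) \<le> (\<Sum>i\<le>k. shape mu i)"
proof -
  have "tableaux (shape mu) \<alpha> \<noteq> {}"
    using assms(2) by (metis card.empty of_nat_0 schur_eq_schur_fun schur_fun_def)
  then obtain T where "T \<in> tableaux (shape mu) \<alpha>" by blast
  then show ?thesis
    using tableau_weight_dominated[OF _ shape_vanishes] shape_decreasing[OF assms(1)] by blast
qed

lemma schur_shape_nonzero: "is_partition mu \<Longrightarrow> schur mu (shape mu) \<noteq> 0"
  unfolding schur_eq_schur_fun using schur_fun_self_nonzero[OF _ shape_vanishes] shape_decreasing
  by blast

text \<open>Evaluate at the test point of a summand of maximal weight.\<close>

lemma triangular_family_independent: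
  fixes b :: "'i \<Rightarrow> 'p \<Rightarrow> 'a :: idom" and w :: "'i \<Rightarrow> nat"
  assumes fin: "finite S" and diag: "\<forall>x\<in>S. b x (t x) \<noteq> 0"
    and triangular: "\<And>x y. x \<in> S \<Longrightarrow> y \<in> S \<Longrightarrow> y \<noteq> x \<Longrightarrow> b y (t x) \<noteq> 0 \<Longrightarrow> w x < w y"
    and zero: "\<forall>p. (\<Sum>x\<in>S. c x * b x p) = 0"
  shows "\<forall>x\<in>S. c x = 0"
proof (rule ccontr)
  define S' where "S' = {x \<in> S. c x \<noteq> 0}"
  assume "\<not> ?thesis"
  then have "S' \<noteq> {}" by (auto simp: S'_def)
  moreover have fin': "finite S'" using fin by (simp add: S'_def)
  ultimately have "Max (w ` S') \<in> w ` S'" by (intro Max_in) auto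
  then obtain x0 where x0: "x0 \<in> S'" "w x0 = Max (w ` S')" by auto
  have others: "c y * b y (t x0) = 0" if "y \<in> S - {x0}" for y
  proof (cases "c y = 0")
    case False
    then have "w y \<le> w x0" using x0(2) fin' that by (simp add: S'_def)
    then have "b y (t x0) = 0" using triangular[of x0 y] that x0(1) by (force simp: S'_def)
    then show ?thesis by simp
  qed simp
  have "x0 \<in> S" using x0(1) by (simp add: S'_def)
  then have "(\<Sum>x\<in>S. c x * b x (t x0)) = c x0 * b x0 (t x0) + (\<Sum>x\<in>S - {x0}. c x * b x (t x0))"
    by (rule sum.remove[OF fin])
  also have "(\<Sum>x\<in>S - {x0}. c x * b x (t x0)) = 0" using others by (rule sum.neutral[OF ballI])
  finally show False using zero diag x0(1) by (simp add: S'_def)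
qed

lemma schur_independent:
  fixes c :: "nat list \<Rightarrow> int"
  assumes fin: "finite S" and part: "\<forall>x\<in>S. is_partition x"
    and zero: "\<forall>\<alpha>. (\<Sum>x\<in>S. c x * schur x \<alpha>) = 0"
  shows "\<forall>x\<in>S. c x = 0"
proof (rule triangular_family_independent[where b = schur and t = shape])
  define W where "W = (\<Sum>x\<in>S. length x)"
  have vanish: "\<forall>i\<ge>W. shape x i = 0" if "x \<in> S" for x
    using member_le_sum[OF that, of length] fin by (auto simp: W_def shape_eq_0)
  fix x y assume xy: "x \<in> S" "y \<in> S" "y \<noteq> x" and nz: "schur y (shape x) \<noteq> 0"
  have "shape x \<noteq> shape y" using xy part shape_inject by metis
  then show "dominance_weight W (shape x) < dominance_weight W (shape y)"
    using schur_nonzero_dominated[OF _ nz] part xy vanish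
    by (intro dominance_weight_less) auto
qed (use fin part zero schur_shape_nonzero in auto)

lemma schur_pairs_independent:
  fixes c :: "nat list \<times> nat list \<Rightarrow> int"
  assumes fin: "finite S" and part: "\<forall>x\<in>S. is_partition (fst x) \<and> is_partition (snd x)"
    and zero: "\<forall>\<alpha> \<beta>. (\<Sum>x\<in>S. c x * (schur (fst x) \<alpha> * schur (snd x) \<beta>)) = 0"
  shows "\<forall>x\<in>S. c x = 0"
proof (rule triangular_family_independent[where b = "\<lambda>x p. schur (fst x) (fst p) * schur (snd x) (snd p)"
      and t = "\<lambda>x. (shape (fst x), shape (snd x))"])
  define W where "W = (\<Sum>x\<in>S. length (fst x) + length (snd x))"
  have vanish: "\<forall>i\<ge>W. shape (fst x) i = 0" "\<forall>i\<ge>W. shape (snd x) i = 0" if "x \<in> S" for x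
    using member_le_sum[OF that, of "\<lambda>x. length (fst x) + length (snd x)"] fin
    by (auto simp: W_def shape_eq_0)
  fix x y assume xy: "x \<in> S" "y \<in> S" "y \<noteq> x"
    and nz: "schur (fst y) (fst (shape (fst x), shape (snd x))) *
      schur (snd y) (snd (shape (fst x), shape (snd x))) \<noteq> 0"
  have dom: "\<forall>k. (\<Sum>i\<le>k. shape (fst x) i) \<le> (\<Sum>i\<le>k. shape (fst y) i)"
    "\<forall>k. (\<Sum>i\<le>k. shape (snd x) i) \<le> (\<Sum>i\<le>k. shape (snd y) i)"
    using nz part xy(2) schur_nonzero_dominated by auto
  note less = dominance_weight_less[OF dom(1) _ vanish(1)[OF xy(2)] vanish(1)[OF xy(1)]]
    dominance_weight_less[OF dom(2) _ vanish(2)[OF xy(2)] vanish(2)[OF xy(1)]]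
  have "shape (fst x) \<noteq> shape (fst y) \<or> shape (snd x) \<noteq> shape (snd y)"
    using xy part shape_inject by (metis prod.expand)
  then show "dominance_weight W (shape (fst x)) + dominance_weight W (shape (snd x)) <
      dominance_weight W (shape (fst y)) + dominance_weight W (shape (snd y))"
    using less dominance_weight_mono[OF dom(1)] dominance_weight_mono[OF dom(2)]
    by (auto intro: add_less_le_mono add_le_less_mono)
qed (use fin zero part schur_shape_nonzero in auto)

section \<open>Schur coefficients\<close>

lemma expansion_unique:
  fixes b :: "'i \<Rightarrow> 'p \<Rightarrow> int"
  assumes indep: "\<And>S c. finite S \<Longrightarrow> \<forall>x\<in>S. P x \<Longrightarrow> \<forall>p. (\<Sum>x\<in>S. c x * b x p) = 0 \<Longrightarrow> \<forall>x\<in>S. c x = 0"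
    and c: "finite {x. c x \<noteq> 0}" "\<forall>x. c x \<noteq> 0 \<longrightarrow> P x"
    and c': "finite {x. c' x \<noteq> 0}" "\<forall>x. c' x \<noteq> 0 \<longrightarrow> P x"
    and eq: "\<forall>p. (\<Sum>x | c x \<noteq> 0. c x * b x p) = (\<Sum>x | c' x \<noteq> 0. c' x * b x p)"
  shows "c' = c"
proof -
  define S where "S = {x. c x \<noteq> 0} \<union> {x. c' x \<noteq> 0}"
  have fin: "finite S" and P: "\<forall>x\<in>S. P x" using c c' by (auto simp: S_def)
  have "\<forall>p. (\<Sum>x\<in>S. (c' x - c x) * b x p) = 0"
  proof
    fix p
    have "(\<Sum>x\<in>S. c x * b x p) = (\<Sum>x | c x \<noteq> 0. c x * b x p)"
      by (rule sum.mono_neutral_right[OF fin]) (auto simp: S_def)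
    moreover have "(\<Sum>x\<in>S. c' x * b x p) = (\<Sum>x | c' x \<noteq> 0. c' x * b x p)"
      by (rule sum.mono_neutral_right[OF fin]) (auto simp: S_def)
    ultimately
    show "(\<Sum>x\<in>S. (c' x - c x) * b x p) = 0"
      using eq by (simp add: left_diff_distrib sum_subtractf)
  qed
  then have "\<forall>x\<in>S. c' x - c x = 0" using indep[OF fin P, where c = "\<lambda>x. c' x - c x"] by simp
  moreover have "c' x = c x" if "x \<notin> S" for x using that by (simp add: S_def)
  ultimately show "c' = c" by (metis eq_iff_diff_eq_0 ext)
qed

lemma schur_coeff_eqI:
  assumes "finite {\<mu>. c \<mu> \<noteq> 0}" "\<forall>\<mu>. c \<mu> \<noteq> 0 \<longrightarrow> is_partition \<mu>"
    and "G = (\<lambda>\<alpha>. \<Sum>\<mu> | c \<mu> \<noteq> 0. c \<mu> * schur \<mu> \<alpha>)"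
  shows "schur_coeff G = c"
  unfolding schur_coeff_def
proof (rule the_equality)
  fix c' assume c': "finite {\<mu>. c' \<mu> \<noteq> 0} \<and> (\<forall>\<mu>. c' \<mu> \<noteq> 0 \<longrightarrow> is_partition \<mu>) \<and>
    G = (\<lambda>\<alpha>. \<Sum>\<mu> | c' \<mu> \<noteq> 0. c' \<mu> * schur \<mu> \<alpha>)"
  have "(\<lambda>\<alpha>. \<Sum>\<mu> | c \<mu> \<noteq> 0. c \<mu> * schur \<mu> \<alpha>) = (\<lambda>\<alpha>. \<Sum>\<mu> | c' \<mu> \<noteq> 0. c' \<mu> * schur \<mu> \<alpha>)"
    using assms(3) c' by simp
  then have "\<forall>\<alpha>. (\<Sum>\<mu> | c \<mu> \<noteq> 0. c \<mu> * schur \<mu> \<alpha>) = (\<Sum>\<mu> | c' \<mu> \<noteq> 0. c' \<mu> * schur \<mu> \<alpha>)"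
    by (simp add: fun_eq_iff)
  with assms(1,2) c' show "c' = c"
    by (intro expansion_unique[where b = schur and P = is_partition, OF schur_independent]) auto
qed (use assms in auto)

lemma schur_coeff2_eqI:
  assumes "finite {m. c m \<noteq> 0}" "\<forall>\<mu> \<nu>. c (\<mu>, \<nu>) \<noteq> 0 \<longrightarrow> is_partition \<mu> \<and> is_partition \<nu>"
    and "F = (\<lambda>\<alpha> \<beta>. \<Sum>(\<mu>, \<nu>)\<in>{m. c m \<noteq> 0}. c (\<mu>, \<nu>) * (schur \<mu> \<alpha> * schur \<nu> \<beta>))"
  shows "schur_coeff2 F = c"
  unfolding schur_coeff2_def
proof (rule the_equality)
  let ?b = "\<lambda>x p. schur (fst x) (fst p) * schur (snd x) (snd p)"
  let ?P = "\<lambda>x. is_partition (fst x) \<and> is_partition (snd x)"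
  have indep: "\<forall>x\<in>S. d x = 0"
    if "finite S" "\<forall>x\<in>S. ?P x" "\<forall>p. (\<Sum>x\<in>S. d x * ?b x p) = 0" for S d
  proof (rule schur_pairs_independent[OF that(1,2)])
    show "\<forall>\<alpha> \<beta>. (\<Sum>x\<in>S. d x * (schur (fst x) \<alpha> * schur (snd x) \<beta>)) = 0"
    proof (intro allI)
      fix \<alpha> \<beta>
      show "(\<Sum>x\<in>S. d x * (schur (fst x) \<alpha> * schur (snd x) \<beta>)) = 0"
        using that(3)[rule_format, of "(\<alpha>, \<beta>)"] by simp
    qed
  qed
  fix c' assume c': "finite {m. c' m \<noteq> 0} \<and>
    (\<forall>\<mu> \<nu>. c' (\<mu>, \<nu>) \<noteq> 0 \<longrightarrow> is_partition \<mu> \<and> is_partition \<nu>) \<and>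
    F = (\<lambda>\<alpha> \<beta>. \<Sum>(\<mu>, \<nu>)\<in>{m. c' m \<noteq> 0}. c' (\<mu>, \<nu>) * (schur \<mu> \<alpha> * schur \<nu> \<beta>))"
  from assms(3) c' have "\<forall>\<alpha> \<beta>.
      (\<Sum>(\<mu>, \<nu>)\<in>{m. c m \<noteq> 0}. c (\<mu>, \<nu>) * (schur \<mu> \<alpha> * schur \<nu> \<beta>)) =
      (\<Sum>(\<mu>, \<nu>)\<in>{m. c' m \<noteq> 0}. c' (\<mu>, \<nu>) * (schur \<mu> \<alpha> * schur \<nu> \<beta>))"
    by (simp add: fun_eq_iff)
  then have "(\<Sum>x | c x \<noteq> 0. c x * ?b x p) = (\<Sum>x | c' x \<noteq> 0. c' x * ?b x p)" for p
    by (simp add: split_def)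
  with assms(1,2) c' show "c' = c"
    by (intro expansion_unique[where b = ?b and P = ?P, OF indep]) auto
qed (use assms in auto)

lemma schur_coeff_pieri:
  assumes "is_partition mu"
  shows "schur_coeff (sf_mult (schur mu) (complete_h a)) = (\<lambda>lam. of_bool (lam \<in> pieri_partitions mu a))"
proof (rule schur_coeff_eqI)
  have set: "{lam. of_bool (lam \<in> pieri_partitions mu a) \<noteq> (0 :: int)} = pieri_partitions mu a" by auto
  show "finite {lam. of_bool (lam \<in> pieri_partitions mu a) \<noteq> (0 :: int)}"
    unfolding set pieri_partitions_def using finite_partitions by simp
  show "\<forall>lam. of_bool (lam \<in> pieri_partitions mu a) \<noteq> (0 :: int) \<longrightarrow> is_partition lam"
    by (simp add: pieri_partitions_def partitions_of_def)
  show "sf_mult (schur mu) (complete_h a) = (\<lambda>\<alpha>. \<Sum>lam | of_bool (lam \<in> pieri_partitions mu a) \<noteq> (0 :: int).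
      of_bool (lam \<in> pieri_partitions mu a) * schur lam \<alpha>)"
    unfolding set pieri_rule[OF assms] by simp
qed

lemma truncate_first_pieri:
  assumes "is_partition mu"
  shows "truncate_first p (sf_mult (schur mu) (complete_h a)) =
    (\<lambda>\<alpha>. \<Sum>lam | lam \<in> pieri_partitions mu a \<and> part lam 1 = p. schur lam \<alpha>)"
  unfolding truncate_first_def schur_coeff_pieri[OF assms] by (rule ext, rule sum.cong) auto

definition strip_count :: "nat \<Rightarrow> nat \<Rightarrow> nat \<Rightarrow> nat \<Rightarrow> nat \<Rightarrow> nat list \<times> nat list \<Rightarrow> int" where
  "strip_count d a b p p' x =
     (if x \<in> partitions_of (a + d) \<times> partitions_of (b + d)
      then int (card {mu \<in> partitions_of d.
        fst x \<in> {lam \<in> pieri_partitions mu a. part lam 1 = p} \<and>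
        snd x \<in> {lam \<in> pieri_partitions mu b. part lam 1 = p'}})
      else 0)"

lemma F_sum_eq_strip_count_expansion:
  "F_sum d a b p p' = (\<lambda>\<alpha> \<beta>. \<Sum>(\<mu>, \<nu>)\<in>{x. strip_count d a b p p' x \<noteq> 0}.
     strip_count d a b p p' (\<mu>, \<nu>) * (schur \<mu> \<alpha> * schur \<nu> \<beta>))"
proof (intro ext)
  fix \<alpha> \<beta>
  define A where "A mu = {lam \<in> pieri_partitions mu a. part lam 1 = p}" for mu
  define B where "B mu = {lam \<in> pieri_partitions mu b. part lam 1 = p'}" for mu
  define Q where "Q = partitions_of (a + d) \<times> partitions_of (b + d)"
  let ?c = "strip_count d a b p p'" and ?g = "\<lambda>x. schur (fst x) \<alpha> * schur (snd x) \<beta>"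
  have finQ: "finite Q" unfolding Q_def using finite_partitions by simp
  have "F_sum d a b p p' \<alpha> \<beta> =
      (\<Sum>mu\<in>partitions_of d. (\<Sum>lam\<in>A mu. schur lam \<alpha>) * (\<Sum>lam\<in>B mu. schur lam \<beta>))"
    unfolding F_sum_def A_def B_def
    by (intro sum.cong refl) (simp add: truncate_first_pieri partitions_of_def)
  also have "\<dots> = (\<Sum>mu\<in>partitions_of d. \<Sum>x\<in>{x \<in> Q. x \<in> A mu \<times> B mu}. ?g x)"
  proof (rule sum.cong[OF refl])
    fix mu assume "mu \<in> partitions_of d"
    then have "{x \<in> Q. x \<in> A mu \<times> B mu} = A mu \<times> B mu"
      by (auto simp: A_def B_def Q_def pieri_partitions_def partitions_of_def add.commute)
    then show "(\<Sum>lam\<in>A mu. schur lam \<alpha>) * (\<Sum>lam\<in>B mu. schur lam \<beta>) =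
        (\<Sum>x\<in>{x \<in> Q. x \<in> A mu \<times> B mu}. ?g x)"
      by (simp add: sum_product sum.cartesian_product split_def)
  qed
  also have "\<dots> = (\<Sum>x\<in>Q. \<Sum>mu | mu \<in> partitions_of d \<and> x \<in> A mu \<times> B mu. ?g x)"
    by (rule sum.swap_restrict[OF finite_partitions finQ])
  also have "\<dots> = (\<Sum>x\<in>Q. ?c x * ?g x)"
    by (simp add: strip_count_def A_def B_def Q_def mem_Times_iff)
  also have "\<dots> = (\<Sum>x | ?c x \<noteq> 0. ?c x * ?g x)"
    by (rule sum.mono_neutral_right[OF finQ]) (auto simp: strip_count_def Q_def)
  finally show "F_sum d a b p p' \<alpha> \<beta> =
      (\<Sum>(\<mu>, \<nu>)\<in>{x. ?c x \<noteq> 0}. ?c (\<mu>, \<nu>) * (schur \<mu> \<alpha> * schur \<nu> \<beta>))"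
    by (simp add: split_def)
qed

lemma schur_coeff2_F_sum:
  assumes lam1: "lam1 \<in> partitions_of (a + d)" and lam2: "lam2 \<in> partitions_of (b + d)"
  shows "schur_coeff2 (F_sum d a b p p') (lam1, lam2) =
    (if part lam1 1 = p \<and> part lam2 1 = p'
     then int (card {mu \<in> partitions_of d.
       horizontal_strip (shape mu) (shape lam1) \<and> horizontal_strip (shape mu) (shape lam2)})
     else 0)"
proof -
  have support: "x \<in> partitions_of (a + d) \<times> partitions_of (b + d)"
    if "strip_count d a b p p' x \<noteq> 0" for x
    using that unfolding strip_count_def by (cases "x \<in> partitions_of (a + d) \<times> partitions_of (b + d)") simp_all
  then have "finite {x. strip_count d a b p p' x \<noteq> 0}"
    using finite_partitions by (blast intro: finite_subset)
  moreover have "\<forall>\<mu> \<nu>. strip_count d a b p p' (\<mu>, \<nu>) \<noteq> 0 \<longrightarrow> is_partition \<mu> \<and> is_partition \<nu>"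
    using support by (fastforce simp: partitions_of_def)
  ultimately have "schur_coeff2 (F_sum d a b p p') = strip_count d a b p p'"
    using F_sum_eq_strip_count_expansion by (rule schur_coeff2_eqI)
  moreover have "{mu \<in> partitions_of d.
      lam1 \<in> {lam \<in> pieri_partitions mu a. part lam 1 = p} \<and>
      lam2 \<in> {lam \<in> pieri_partitions mu b. part lam 1 = p'}} =
    (if part lam1 1 = p \<and> part lam2 1 = p'
     then {mu \<in> partitions_of d.
       horizontal_strip (shape mu) (shape lam1) \<and> horizontal_strip (shape mu) (shape lam2)}
     else {})"
    using lam1 lam2 by (auto simp: pieri_partitions_def partitions_of_def add.commute)
  ultimately show ?thesis using lam1 lam2 by (simp add: strip_count_def)
qed

section \<open>Counting partitions between two bounds\<close>

definition bounded_compositions :: "(nat \<Rightarrow> nat) \<Rightarrow> nat \<Rightarrow> nat \<Rightarrow> (nat \<Rightarrow> nat) set" where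
  "bounded_compositions r N e = {j. (\<forall>i<N. j i \<le> r i) \<and> (\<forall>i\<ge>N. j i = 0) \<and> (\<Sum>i<N. j i) = e}"

lemma finite_bounded_compositions: "finite (bounded_compositions r N e)"
proof -
  have "bounded_compositions r N e \<subseteq> {h. (\<forall>x. x \<notin> {..<N} \<longrightarrow> h x = 0) \<and> (\<forall>x. h x \<le> e)}"
  proof (intro subsetI CollectI conjI allI impI)
    fix j x assume j: "j \<in> bounded_compositions r N e"
    then show "x \<notin> {..<N} \<Longrightarrow> j x = 0" by (simp add: bounded_compositions_def)
    show "j x \<le> e"
    proof (cases "x < N")
      case True
      then have "j x \<le> (\<Sum>i<N. j i)" by (intro member_le_sum) auto
      then show ?thesis using j by (simp add: bounded_compositions_def)
    qed (use j in \<open>simp add: bounded_compositions_def\<close>)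
  qed
  then show ?thesis using finite_bounded_funs[of "{..<N}" e] finite_subset by blast
qed

lemma bounded_compositions_Suc:
  "bounded_compositions r (Suc N) e =
    (\<Union>k\<in>{k. k \<le> e \<and> e - k \<le> r N}. (\<lambda>j. j(N := e - k)) ` bounded_compositions r N k)"
proof
  show "bounded_compositions r (Suc N) e \<subseteq>
      (\<Union>k\<in>{k. k \<le> e \<and> e - k \<le> r N}. (\<lambda>j. j(N := e - k)) ` bounded_compositions r N k)"
  proof
    fix j assume j: "j \<in> bounded_compositions r (Suc N) e"
    then have sum: "(\<Sum>i<N. j i) + j N = e" by (simp add: bounded_compositions_def)
    have "(\<Sum>i<N. (j(N := 0)) i) = (\<Sum>i<N. j i)" by (rule sum.cong) auto
    then have "j(N := 0) \<in> bounded_compositions r N (e - j N)"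
      using j sum by (auto simp: bounded_compositions_def)
    moreover have "j = (j(N := 0))(N := e - (e - j N))" using sum by auto
    moreover have "e - j N \<in> {k. k \<le> e \<and> e - k \<le> r N}"
      using j sum by (auto simp: bounded_compositions_def)
    ultimately show "j \<in> (\<Union>k\<in>{k. k \<le> e \<and> e - k \<le> r N}.
        (\<lambda>j. j(N := e - k)) ` bounded_compositions r N k)" by blast
  qed
  show "(\<Union>k\<in>{k. k \<le> e \<and> e - k \<le> r N}. (\<lambda>j. j(N := e - k)) ` bounded_compositions r N k)
      \<subseteq> bounded_compositions r (Suc N) e"
  proof
    fix x assume "x \<in> (\<Union>k\<in>{k. k \<le> e \<and> e - k \<le> r N}.
        (\<lambda>j. j(N := e - k)) ` bounded_compositions r N k)"
    then obtain k j where k: "k \<le> e" "e - k \<le> r N" and j: "j \<in> bounded_compositions r N k"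
      and x: "x = j(N := e - k)" by auto
    have "(\<Sum>i<N. x i) = (\<Sum>i<N. j i)" unfolding x by (rule sum.cong) auto
    then show "x \<in> bounded_compositions r (Suc N) e"
      using j k by (auto simp: bounded_compositions_def x less_Suc_eq)
  qed
qed

lemma card_bounded_compositions_Suc:
  "card (bounded_compositions r (Suc N) e) =
    (\<Sum>k | k \<le> e \<and> e - k \<le> r N. card (bounded_compositions r N k))"
proof -
  define I where "I = {k. k \<le> e \<and> e - k \<le> r N}"
  define E where "E k = (\<lambda>j. j(N := e - k)) ` bounded_compositions r N k" for k
  have inj: "inj_on (\<lambda>j. j(N := e - k)) (bounded_compositions r N k)" for k
  proof (rule inj_onI)
    fix x y assume xy: "x \<in> bounded_compositions r N k" "y \<in> bounded_compositions r N k"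
      "x(N := e - k) = y(N := e - k)"
    show "x = y"
    proof
      fix i show "x i = y i"
      proof (cases "i = N")
        case True then show ?thesis using xy(1,2) by (simp add: bounded_compositions_def)
      next
        case False then show ?thesis using fun_cong[OF xy(3), of i] by simp
      qed
    qed
  qed
  have "E k1 \<inter> E k2 = {}" if "k1 \<in> I" "k2 \<in> I" "k1 \<noteq> k2" for k1 k2
  proof -
    have "e - k1 \<noteq> e - k2" using that by (auto simp: I_def)
    then show ?thesis unfolding E_def by (auto dest: fun_cong[where x = N])
  qed
  moreover have "finite I" by (rule finite_subset[of _ "{..e}"]) (auto simp: I_def)
  ultimately have "card (bounded_compositions r (Suc N) e) = (\<Sum>k\<in>I. card (E k))"
    unfolding bounded_compositions_Suc I_def[symmetric] E_def[symmetric]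
    using finite_bounded_compositions by (simp add: card_UN_disjoint E_def)
  also have "\<dots> = (\<Sum>k\<in>I. card (bounded_compositions r N k))"
    using inj by (simp add: E_def card_image)
  finally show ?thesis unfolding I_def .
qed

lemma coeff_prod_geometric:
  "coeff (\<Prod>i<N. \<Sum>t=0..r i. monom (1::int) t) e = int (card (bounded_compositions r N e))"
proof (induction N arbitrary: e)
  case 0
  have "bounded_compositions r 0 e = (if e = 0 then {\<lambda>_. 0} else {})"
    by (auto simp: bounded_compositions_def)
  then show ?case by simp
next
  case (Suc N)
  have "coeff (\<Prod>i<Suc N. \<Sum>t=0..r i. monom (1::int) t) e =
      (\<Sum>k\<le>e. int (card (bounded_compositions r N k)) * (if e - k \<le> r N then 1 else 0))"
    by (simp add: coeff_mult Suc.IH coeff_sum)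
  also have "\<dots> = (\<Sum>k | k \<le> e \<and> e - k \<le> r N. int (card (bounded_compositions r N k)))"
  proof -
    have eq: "{k. k \<le> e \<and> e - k \<le> r N} = {k \<in> {..e}. e - k \<le> r N}" by auto
    show ?thesis unfolding eq sum.inter_filter[OF finite_atMost] by (rule sum.cong) auto
  qed
  finally show ?case by (simp add: card_bounded_compositions_Suc)
qed

definition partitions_between :: "nat \<Rightarrow> (nat \<Rightarrow> nat) \<Rightarrow> (nat \<Rightarrow> nat) \<Rightarrow> nat list set" where
  "partitions_between d lo hi = {mu \<in> partitions_of d. \<forall>i. lo i \<le> shape mu i \<and> shape mu i \<le> hi i}"

lemma partitions_between_excess:
  assumes mu: "mu \<in> partitions_between d lo hi" and vanish: "\<forall>i\<ge>N. hi i = 0"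
  shows "\<forall>i\<ge>N. shape mu i = 0" "(\<Sum>i<N. shape mu i - lo i) + (\<Sum>i<N. lo i) = d"
proof -
  have bounds: "lo i \<le> shape mu i" "shape mu i \<le> hi i" for i
    using mu by (simp_all add: partitions_between_def)
  show shape_vanish: "\<forall>i\<ge>N. shape mu i = 0" using bounds(2) vanish le_zero_eq by metis
  have "d = (\<Sum>i<N. shape mu i)"
    using mu shape_size_eq_sum[OF shape_vanish] shape_size_shape[of mu]
    by (simp add: partitions_between_def partitions_of_def)
  also have "\<dots> = (\<Sum>i<N. (shape mu i - lo i) + lo i)" using bounds(1) by (intro sum.cong) auto
  finally show "(\<Sum>i<N. shape mu i - lo i) + (\<Sum>i<N. lo i) = d" by (simp add: sum.distrib)
qed

lemma bounded_composition_plus_lower: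
  assumes hi_lo: "\<forall>i. hi (Suc i) \<le> lo i" and lo_hi: "\<forall>i. lo i \<le> hi i" and vanish: "\<forall>i\<ge>N. hi i = 0"
    and j: "j \<in> bounded_compositions (\<lambda>i. hi i - lo i) N e"
  shows "shape (partition_of_shape (\<lambda>i. j i + lo i)) = (\<lambda>i. j i + lo i)"
    "is_partition (partition_of_shape (\<lambda>i. j i + lo i))"
    "\<forall>i. lo i \<le> j i + lo i \<and> j i + lo i \<le> hi i" "\<forall>i\<ge>N. j i + lo i = 0"
proof -
  show bounds: "\<forall>i. lo i \<le> j i + lo i \<and> j i + lo i \<le> hi i"
  proof
    fix i show "lo i \<le> j i + lo i \<and> j i + lo i \<le> hi i"
    proof (cases "i < N")
      case True
      then have "j i \<le> hi i - lo i" using j by (simp add: bounded_compositions_def)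
      then show ?thesis using lo_hi[rule_format, of i] by linarith
    next
      case False
      then have "j i = 0" using j by (simp add: bounded_compositions_def)
      then show ?thesis using lo_hi by simp
    qed
  qed
  show lift_vanish: "\<forall>i\<ge>N. j i + lo i = 0" using bounds vanish le_zero_eq by metis
  have "\<forall>i. j (Suc i) + lo (Suc i) \<le> j i + lo i" using bounds hi_lo le_trans by blast
  then show "shape (partition_of_shape (\<lambda>i. j i + lo i)) = (\<lambda>i. j i + lo i)"
    "is_partition (partition_of_shape (\<lambda>i. j i + lo i))"
    using partition_of_shape[OF _ lift_vanish] by simp_all
qed

text \<open>Since \<open>hi (i + 1) \<le> lo i\<close>, every sequence between the bounds is weakly decreasing, so
  the partitions between the bounds correspond to their excesses over \<open>lo\<close>.\<close>

lemma bij_betw_partitions_between: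
  assumes hi_lo: "\<forall>i. hi (Suc i) \<le> lo i" and lo_hi: "\<forall>i. lo i \<le> hi i" and vanish: "\<forall>i\<ge>N. hi i = 0"
    and d: "(\<Sum>i<N. lo i) \<le> d"
  shows "bij_betw (\<lambda>mu i. shape mu i - lo i) (partitions_between d lo hi)
    (bounded_compositions (\<lambda>i. hi i - lo i) N (d - (\<Sum>i<N. lo i)))"
proof (rule bij_betw_byWitness[where f' = "\<lambda>j. partition_of_shape (\<lambda>i. j i + lo i)"])
  note lift = bounded_composition_plus_lower[OF hi_lo lo_hi vanish]
  show "\<forall>mu\<in>partitions_between d lo hi. partition_of_shape (\<lambda>i. shape mu i - lo i + lo i) = mu"
  proof
    fix mu assume mu: "mu \<in> partitions_between d lo hi"
    then have "(\<lambda>i. shape mu i - lo i + lo i) = shape mu" by (auto simp: partitions_between_def)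
    then show "partition_of_shape (\<lambda>i. shape mu i - lo i + lo i) = mu"
      using mu partition_of_shape_shape by (simp add: partitions_between_def partitions_of_def)
  qed
  show "\<forall>j\<in>bounded_compositions (\<lambda>i. hi i - lo i) N (d - (\<Sum>i<N. lo i)).
      (\<lambda>i. shape (partition_of_shape (\<lambda>i. j i + lo i)) i - lo i) = j"
    using lift(1) by simp
  show "(\<lambda>mu i. shape mu i - lo i) ` partitions_between d lo hi
      \<subseteq> bounded_compositions (\<lambda>i. hi i - lo i) N (d - (\<Sum>i<N. lo i))"
  proof
    fix j assume "j \<in> (\<lambda>mu i. shape mu i - lo i) ` partitions_between d lo hi"
    then obtain mu where mu: "mu \<in> partitions_between d lo hi" and j: "j = (\<lambda>i. shape mu i - lo i)"
      by blast
    note excess = partitions_between_excess[OF mu vanish]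
    have "\<forall>i<N. j i \<le> hi i - lo i" using mu by (auto simp: j partitions_between_def diff_le_mono)
    moreover have "\<forall>i\<ge>N. j i = 0" using excess(1) by (simp add: j)
    moreover have "(\<Sum>i<N. j i) = d - (\<Sum>i<N. lo i)" using excess(2) by (simp add: j)
    ultimately show "j \<in> bounded_compositions (\<lambda>i. hi i - lo i) N (d - (\<Sum>i<N. lo i))"
      by (simp add: bounded_compositions_def)
  qed
  show "(\<lambda>j. partition_of_shape (\<lambda>i. j i + lo i)) `
      bounded_compositions (\<lambda>i. hi i - lo i) N (d - (\<Sum>i<N. lo i)) \<subseteq> partitions_between d lo hi"
  proof
    fix mu assume "mu \<in> (\<lambda>j. partition_of_shape (\<lambda>i. j i + lo i)) `
        bounded_compositions (\<lambda>i. hi i - lo i) N (d - (\<Sum>i<N. lo i))"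
    then obtain j where j: "j \<in> bounded_compositions (\<lambda>i. hi i - lo i) N (d - (\<Sum>i<N. lo i))"
      and mu: "mu = partition_of_shape (\<lambda>i. j i + lo i)" by blast
    have "sum_list mu = (\<Sum>i<N. j i + lo i)"
      using lift(1)[OF j] shape_size_shape[of mu] shape_size_eq_sum[OF lift(4)[OF j]] mu by simp
    also have "\<dots> = d" using j d by (simp add: sum.distrib bounded_compositions_def)
    finally show "mu \<in> partitions_between d lo hi"
      using lift[OF j] mu by (simp add: partitions_between_def partitions_of_def)
  qed
qed

lemma card_partitions_between:
  assumes hi_lo: "\<forall>i. hi (Suc i) \<le> lo i" and vanish: "\<forall>i\<ge>N. hi i = 0"
  shows "int (card (partitions_between d lo hi)) =
    (if (\<forall>i. lo i \<le> hi i) \<and> (\<Sum>i<N. lo i) \<le> d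
     then coeff (\<Prod>i<N. \<Sum>j=0..hi i - lo i. monom 1 j) (d - (\<Sum>i<N. lo i)) else 0)"
proof (cases "(\<forall>i. lo i \<le> hi i) \<and> (\<Sum>i<N. lo i) \<le> d")
  case True
  then show ?thesis
    using bij_betw_same_card[OF bij_betw_partitions_between[OF hi_lo _ vanish]] coeff_prod_geometric
    by simp
next
  case False
  have empty: "partitions_between d lo hi = {}"
  proof (intro equals0I)
    fix mu assume mu: "mu \<in> partitions_between d lo hi"
    then have "lo i \<le> hi i" for i by (auto simp: partitions_between_def intro: order_trans)
    moreover have "(\<Sum>i<N. lo i) \<le> d" using partitions_between_excess(2)[OF mu vanish] by linarith
    ultimately show False using False by blast
  qed
  show ?thesis unfolding if_not_P[OF False] empty by simp
qed

theorem mainTheorem2: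
  fixes d a b p p' :: nat and lam1 lam2 :: "nat list"
  assumes "lam1 \<in> partitions_of (a + d)" and "lam2 \<in> partitions_of (b + d)"
  shows "schur_coeff2 (F_sum d a b p p') (lam1, lam2) =
    (if part lam1 1 = p \<and> part lam2 1 = p' \<and>
        (\<forall>i\<ge>1. min (part lam1 i) (part lam2 i) \<ge> max (part lam1 (i + 1)) (part lam2 (i + 1)))
     then (let N = length lam1 + length lam2;
               S = (\<Sum>i=1..N. max (part lam1 (i + 1)) (part lam2 (i + 1)));
               P = (\<Prod>i=1..N. \<Sum>j=0..min (part lam1 i) (part lam2 i)
                                      - max (part lam1 (i + 1)) (part lam2 (i + 1)).
                                  monom (1::int) j)
           in if S \<le> d then coeff P (d - S) else 0)
     else 0)"
proof -
  define lo where "lo i = max (shape lam1 (Suc i)) (shape lam2 (Suc i))" for i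
  define hi where "hi i = min (shape lam1 i) (shape lam2 i)" for i
  define N where "N = length lam1 + length lam2"
  have "horizontal_strip (shape mu) (shape lam1) \<and> horizontal_strip (shape mu) (shape lam2)
      \<longleftrightarrow> (\<forall>i. lo i \<le> shape mu i \<and> shape mu i \<le> hi i)" for mu
    by (auto simp: horizontal_strip_def lo_def hi_def)
  then have "schur_coeff2 (F_sum d a b p p') (lam1, lam2) =
      (if part lam1 1 = p \<and> part lam2 1 = p' then int (card (partitions_between d lo hi)) else 0)"
    unfolding schur_coeff2_F_sum[OF assms] partitions_between_def by simp
  moreover have "\<forall>i. hi (Suc i) \<le> lo i" "\<forall>i\<ge>N. hi i = 0"
    by (auto simp: lo_def hi_def N_def shape_eq_0)
  moreover have "(\<forall>i\<ge>1. min (part lam1 i) (part lam2 i) \<ge> max (part lam1 (i + 1)) (part lam2 (i + 1)))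
      \<longleftrightarrow> (\<forall>i. lo i \<le> hi i)"
    unfolding lo_def hi_def part_Suc_eq_shape[symmetric] Suc_eq_plus1
    by (metis add.commute le_add1 le_add_diff_inverse)
  ultimately show ?thesis
    using card_partitions_between[of hi lo N d]
    by (simp add: Let_def N_def[symmetric] sum.atLeast1_atMost_eq prod.atLeast1_atMost_eq
        lo_def hi_def part_Suc_eq_shape)
qed

end
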